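(* Let $A$ be a finite abelian $p$-group written additively, with a decomposition $A=A_1\oplus\dots\oplus A_k$ into nontrivial homocyclic components of pairwise different exponents, and let $H$ be a finite group of order not divisible by $p$. Let $\Lambda:\mathrm{Aut}(A)\to\mathrm{Aut}(A_1/pA_1)\times\dots\times\mathrm{Aut}(A_k/pA_k)$ be the surjective homomorphism sending an automorphism, written as a matrix $(u_{ij})$ with $u_{ij}\in\mathrm{Hom}(A_i,A_j)$ (so that $x=(x_1,\dots,x_k)\mapsto(\sum_i u_{i1}(x_i),\dots,\sum_i u_{ik}(x_i))$), to $(\overline{u_{11}},\dots,\overline{u_{kk}})$ where $\overline{u_{ii}}(x+pA_i)=u_{ii}(x)+pA_i$, and let $\Lambda_i:\mathrm{Aut}(A)\to\mathrm{Aut}(A_i/pA_i)$ be $\Lambda$ followed by projection to the $i$-th factor. Then for representations $\alpha,\beta:H\to\mathrm{Aut}(A)$ we have $\alpha\sim\beta$ if and only if $\alpha\circ\Lambda_i\sim\beta\circ\Lambda_i$ for all $i=1,\dots,k$ (here $\alpha\circ\Lambda_i$ means first $\alpha$, then $\Lambda_i$).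
   Context: A representation of $H$ on an abelian group $B$ is a homomorphism $H\to\mathrm{Aut}(B)$. $\mathrm{Aut}(B)$ acts on representations by $\alpha^\psi(h)=\psi^{-1}\alpha(h)\psi$, and $\alpha\sim\beta$ means $\alpha^\psi=\beta$ for some $\psi\in\mathrm{Aut}(B)$. An abelian $p$-group is homocyclic if it is a direct product of cyclic groups of the same order. Maps are composed left to right. *)

theory Defs
  imports "HOL-Algebra.Algebra"
begin

text \<open>Abelian groups are written multiplicatively (HOL-Algebra), so "pA" becomes
  the set of p-th powers and "A_1 (+) ... (+) A_k" an internal direct product.\<close>

definition int_dirprod :: "('a, 'b) monoid_scheme \<Rightarrow> (nat \<Rightarrow> 'a set) \<Rightarrow> nat \<Rightarrow> bool" where
  "int_dirprod G A k \<longleftrightarrow> (\<forall>i<k. subgroup (A i) G) \<and>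
     bij_betw (\<lambda>x. finprod G x {..<k}) (PiE {..<k} A) (carrier G)"

definition dp_comp :: "('a, 'b) monoid_scheme \<Rightarrow> (nat \<Rightarrow> 'a set) \<Rightarrow> nat \<Rightarrow> nat \<Rightarrow> 'a \<Rightarrow> 'a" where
  "dp_comp G A k i g = (THE x. x \<in> PiE {..<k} A \<and> finprod G x {..<k} = g) i"

definition grp_exponent :: "('a, 'b) monoid_scheme \<Rightarrow> nat" where
  "grp_exponent G = Lcm (group.ord G ` carrier G)"

definition homocyclic :: "('a, 'b) monoid_scheme \<Rightarrow> 'a set \<Rightarrow> bool" where
  "homocyclic G S \<longleftrightarrow> (\<exists>n C. int_dirprod (G\<lparr>carrier := S\<rparr>) C n \<and>
      (\<forall>j<n. \<exists>g\<in>S. C j = generate G {g}) \<and>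
      (\<forall>j<n. \<forall>l<n. card (C j) = card (C l)))"

definition pmult :: "('a, 'b) monoid_scheme \<Rightarrow> nat \<Rightarrow> 'a set \<Rightarrow> 'a set" where
  "pmult G p S = (\<lambda>x. x [^]\<^bsub>G\<^esub> p) ` S"

definition quotp :: "('a, 'b) monoid_scheme \<Rightarrow> nat \<Rightarrow> 'a set \<Rightarrow> 'a set monoid" where
  "quotp G p S = (G\<lparr>carrier := S\<rparr>) Mod (pmult G p S)"

text \<open>Lambda_i: an automorphism phi of G, with diagonal entry u_ii = (i-th component of phi)
  restricted to A i, is sent to the induced map on A i / p A i,
  x + pA_i \<mapsto> u_ii(x) + pA_i.\<close>
definition Lambda_i :: "('a, 'b) monoid_scheme \<Rightarrow> nat \<Rightarrow> (nat \<Rightarrow> 'a set) \<Rightarrow> nat \<Rightarrow> nat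
    \<Rightarrow> ('a \<Rightarrow> 'a) \<Rightarrow> ('a set \<Rightarrow> 'a set)" where
  "Lambda_i G p A k i \<phi> = restrict (\<lambda>Y.
      r_coset G (pmult G p (A i)) (dp_comp G A k i (\<phi> (SOME x. x \<in> Y))))
      (carrier (quotp G p (A i)))"

definition rep_equiv :: "('h, 'c) monoid_scheme \<Rightarrow> ('k, 'd) monoid_scheme
    \<Rightarrow> ('h \<Rightarrow> 'k) \<Rightarrow> ('h \<Rightarrow> 'k) \<Rightarrow> bool" where
  "rep_equiv H K \<alpha> \<beta> \<longleftrightarrow> (\<exists>\<psi>\<in>carrier K. \<forall>h\<in>carrier H.
      \<beta> h = inv\<^bsub>K\<^esub> \<psi> \<otimes>\<^bsub>K\<^esub> \<alpha> h \<otimes>\<^bsub>K\<^esub> \<psi>)"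

end

(* For i \<noteq> j the components A_i and A_j have different exponents, so every composite
   A_i \<rightarrow> A_j \<rightarrow> A_i of homomorphisms lands in pA_i: whichever of the two maps goes into the
   component of larger exponent produces elements killed by a smaller power of p, and in a
   homocyclic p-group these are p-th powers. Hence modulo pA_i only the diagonal entry of an
   endomorphism matters, so \<Lambda>_i is a homomorphism and \<alpha> ~ \<beta> implies \<Lambda>_i \<circ> \<alpha> ~ \<Lambda>_i \<circ> \<beta>.

   Conversely, let \<psi>_i intertwine \<Lambda>_i \<circ> \<beta> with \<Lambda>_i \<circ> \<alpha>. A homocyclic group of exponent e
   is free over Z/e, so each \<psi>_i lifts to an endomorphism of A_i, and together they give an
   endomorphism S of A lifting every \<psi>_i. The average T = m \<Sum>_h \<alpha>(h) S \<beta>(h)\<inverse>, with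
   m |H| \<equiv> 1 (mod p), intertwines \<beta> with \<alpha> and still induces \<psi>_i on every A_i/pA_i.
   Ordering the components by exponent, the reduction of T modulo pA is block triangular with
   invertible diagonal blocks, so T is surjective modulo pA, hence surjective because A is a
   p-group, hence an automorphism. *)

theory Submission
  imports Defs
begin

lemma nat_pow_carrier_update [simp]:
  "x [^]\<^bsub>G\<lparr>carrier := S\<rparr>\<^esub> (n::nat) = x [^]\<^bsub>G\<^esub> n"
  by (simp add: nat_pow_def)

lemma r_coset_carrier_update [simp]: "r_coset (G\<lparr>carrier := S\<rparr>) N x = r_coset G N x"
  by (simp add: r_coset_def)

lemma hom_compose_fun: "f \<in> hom G H \<Longrightarrow> g \<in> hom H K \<Longrightarrow> (\<lambda>x. g (f x)) \<in> hom G K"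
  unfolding hom_def by (auto simp: Pi_def)

lemma (in group) endo_hom_inv: "f \<in> hom G G \<Longrightarrow> x \<in> carrier G \<Longrightarrow> f (inv x) = inv (f x)"
  using group_hom.hom_inv[of G G f x] by (simp add: group_hom_def group_hom_axioms_def is_group)

lemma (in comm_group) pow_hom: "(\<lambda>x. x [^] (n::nat)) \<in> hom G G"
  by (rule homI) (simp_all add: pow_mult_distrib m_comm)

lemma (in comm_group) hom_finprod:
  assumes h: "h \<in> hom G K" and K: "comm_group K" and f: "f \<in> I \<rightarrow> carrier G"
  shows "h (finprod G f I) = finprod K (\<lambda>i. h (f i)) I"
proof -
  interpret K: comm_group K by (fact K)
  have h_one: "h \<one> = \<one>\<^bsub>K\<^esub>"
    using hom_one[OF h is_group K.is_group] .
  show ?thesis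
    using f
  proof (induct I rule: infinite_finite_induct)
    case (insert a I)
    have "(\<lambda>i. h (f i)) \<in> insert a I \<rightarrow> carrier K"
      using h insert.prems by (auto simp: hom_def)
    with insert h show ?case
      by (simp add: hom_mult)
  qed (simp_all add: h_one)
qed

lemma (in comm_group) finprod_in_subgroup:
  assumes M: "subgroup M G" and f: "f \<in> I \<rightarrow> M"
  shows "finprod G f I \<in> M"
  using f
proof (induct I rule: infinite_finite_induct)
  case (insert a I)
  have "f \<in> I \<rightarrow> carrier G" "f a \<in> carrier G"
    using insert.prems subgroup.subset[OF M] by auto
  with insert show ?case
    by (simp add: subgroup.m_closed[OF M])
qed (simp_all add: subgroup.one_closed[OF M])

lemma (in comm_group) subgroup_comm_group:
  assumes "subgroup S G"
  shows "comm_group (G\<lparr>carrier := S\<rparr>)"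
proof -
  have "group (G\<lparr>carrier := S\<rparr>)"
    using subgroup.subgroup_is_group[OF assms is_group] .
  then show ?thesis
    by (rule group.group_comm_groupI) (use m_comm subgroup.subset[OF assms] in auto)
qed

lemma (in group) subgroup_nat_pow_closed:
  assumes "subgroup S G" and "x \<in> S"
  shows "x [^] (n::nat) \<in> S"
  using monoid.nat_pow_closed[OF group.is_monoid[OF subgroup.subgroup_is_group[OF assms(1) is_group]]]
    assms(2) by simp

lemma (in group) rcos_eq_iff:
  assumes H: "subgroup H G" and a: "a \<in> carrier G" and b: "b \<in> carrier G"
  shows "H #> a = H #> b \<longleftrightarrow> a \<otimes> inv b \<in> H"
proof
  assume "H #> a = H #> b"
  then have "a \<in> H #> b"
    using rcos_self[OF a H] by simp
  then show "a \<otimes> inv b \<in> H"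
    using subgroup.rcos_module[OF H is_group b a] by simp
next
  assume "a \<otimes> inv b \<in> H"
  then have "a \<in> H #> b"
    using subgroup.rcos_module[OF H is_group b a] by simp
  then show "H #> a = H #> b"
    using repr_independence[OF _ b H] by simp
qed

lemma (in group) ord_in_subgroup:
  assumes S: "subgroup S G" and x: "x \<in> S"
  shows "group.ord (G\<lparr>carrier := S\<rparr>) x = ord x"
proof -
  interpret S: group "G\<lparr>carrier := S\<rparr>"
    using subgroup.subgroup_is_group[OF S is_group] .
  have "S.ord x dvd n \<longleftrightarrow> ord x dvd n" for n
    using S.pow_eq_id[of x n] pow_eq_id[of x n] x subgroup.mem_carrier[OF S x] by simp
  then show ?thesis
    by (meson dvd_antisym dvd_refl)
qed

lemma (in group) pow_eq_transfer:
  assumes g: "g \<in> carrier G" and y: "y \<in> carrier G" and y_ord: "y [^] ord g = \<one>"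
    and eq: "g [^] (a::nat) = g [^] (b::nat)"
  shows "y [^] a = y [^] b"
proof -
  have "int (ord g) dvd int b - int a"
    using int_pow_eq[OF g, of "int a" "int b"] eq by (simp add: int_pow_int)
  moreover have "int (ord y) dvd int (ord g)"
    using pow_eq_id[OF y] y_ord by simp
  ultimately have "int (ord y) dvd int b - int a"
    using dvd_trans by blast
  then show ?thesis
    using int_pow_eq[OF y, of "int a" "int b"] by (simp add: int_pow_int)
qed

lemma exists_inverse_mod_prime:
  fixes p n :: nat
  assumes p: "Factorial_Ring.prime p" and n: "\<not> p dvd n"
  shows "\<exists>m q. n * m = p * q + 1"
proof -
  have "n \<noteq> 0"
    using n by (metis dvd_0_right)
  moreover have "gcd n p = 1"
    using prime_imp_coprime[OF p n] by (simp add: coprime_iff_gcd_eq_1 gcd.commute)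
  ultimately show ?thesis
    using bezout_nat[of n p] by auto
qed

section \<open>Internal direct products\<close>

definition dp_diag ::
    "('a, 'b) monoid_scheme \<Rightarrow> (nat \<Rightarrow> 'a set) \<Rightarrow> nat \<Rightarrow> (nat \<Rightarrow> 'a \<Rightarrow> 'a) \<Rightarrow> 'a \<Rightarrow> 'a" where
  "dp_diag G A k s y = finprod G (\<lambda>j. s j (dp_comp G A k j y)) {..<k}"

context comm_group
begin

context
  fixes A :: "nat \<Rightarrow> 'a set" and k :: nat
  assumes dec: "int_dirprod G A k"
begin

lemma int_dirprod_subgroup: "i < k \<Longrightarrow> subgroup (A i) G"
  using dec unfolding int_dirprod_def by blast

lemma int_dirprod_subset: "i < k \<Longrightarrow> A i \<subseteq> carrier G"
  using int_dirprod_subgroup subgroup.subset by blast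

lemma dp_comp_finprod:
  assumes f: "f \<in> PiE {..<k} A"
  shows "dp_comp G A k i (finprod G f {..<k}) = f i"
proof -
  have "inj_on (\<lambda>x. finprod G x {..<k}) (PiE {..<k} A)"
    using dec unfolding int_dirprod_def bij_betw_def by blast
  then have "(THE x. x \<in> PiE {..<k} A \<and> finprod G x {..<k} = finprod G f {..<k}) = f"
    using f by (intro the_equality) (auto simp: inj_on_def)
  then show ?thesis
    unfolding dp_comp_def by simp
qed

lemma dp_comp_restrict_in_PiE:
  assumes x: "x \<in> carrier G"
  shows "(\<lambda>i\<in>{..<k}. dp_comp G A k i x) \<in> PiE {..<k} A"
    and "finprod G (\<lambda>i. dp_comp G A k i x) {..<k} = x"
proof -
  obtain f where f: "f \<in> PiE {..<k} A" "finprod G f {..<k} = x"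
    using dec x unfolding int_dirprod_def bij_betw_def by (metis imageE)
  have comp: "\<And>i. i < k \<Longrightarrow> dp_comp G A k i x = f i"
    using dp_comp_finprod[OF f(1)] f(2) by simp
  have "(\<lambda>i\<in>{..<k}. dp_comp G A k i x) = f"
    using f(1) comp by (auto simp: PiE_def extensional_def)
  then show "(\<lambda>i\<in>{..<k}. dp_comp G A k i x) \<in> PiE {..<k} A"
    using f by simp
  have "finprod G (\<lambda>i. dp_comp G A k i x) {..<k} = finprod G f {..<k}"
    by (rule finprod_cong') (use f(1) comp int_dirprod_subset in \<open>auto simp: PiE_def Pi_def\<close>)
  then show "finprod G (\<lambda>i. dp_comp G A k i x) {..<k} = x"
    using f by simp
qed

lemmas finprod_dp_comp = dp_comp_restrict_in_PiE(2)

lemma dp_comp_in: "x \<in> carrier G \<Longrightarrow> i < k \<Longrightarrow> dp_comp G A k i x \<in> A i"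
  using dp_comp_restrict_in_PiE(1) by (auto simp: PiE_def Pi_def)

lemma dp_comp_carrier: "x \<in> carrier G \<Longrightarrow> i < k \<Longrightarrow> dp_comp G A k i x \<in> carrier G"
  using dp_comp_in int_dirprod_subset by blast

lemma dp_comp_mult:
  assumes x: "x \<in> carrier G" and y: "y \<in> carrier G" and i: "i < k"
  shows "dp_comp G A k i (x \<otimes> y) = dp_comp G A k i x \<otimes> dp_comp G A k i y"
proof -
  let ?f = "\<lambda>j\<in>{..<k}. dp_comp G A k j x \<otimes> dp_comp G A k j y"
  have f: "?f \<in> PiE {..<k} A"
    by (auto simp: restrict_PiE_iff intro: subgroup.m_closed[OF int_dirprod_subgroup] dp_comp_in x y)
  have cx: "(\<lambda>j. dp_comp G A k j x) \<in> {..<k} \<rightarrow> carrier G"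
    and cy: "(\<lambda>j. dp_comp G A k j y) \<in> {..<k} \<rightarrow> carrier G"
    using x y dp_comp_carrier by auto
  have "finprod G ?f {..<k} = finprod G (\<lambda>j. dp_comp G A k j x \<otimes> dp_comp G A k j y) {..<k}"
    using cx cy by (intro finprod_cong') auto
  also have "\<dots> = finprod G (\<lambda>j. dp_comp G A k j x) {..<k} \<otimes>
      finprod G (\<lambda>j. dp_comp G A k j y) {..<k}"
    using finprod_multf[OF cx cy] .
  also have "\<dots> = x \<otimes> y"
    using x y by (simp add: finprod_dp_comp)
  finally show ?thesis
    using dp_comp_finprod[OF f, of i] i by simp
qed

lemma dp_comp_hom: "i < k \<Longrightarrow> dp_comp G A k i \<in> hom G G"
  by (rule homI) (simp_all add: dp_comp_carrier dp_comp_mult)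

lemma dp_comp_of_component:
  assumes i: "i < k" and x: "x \<in> A i" and j: "j < k"
  shows "dp_comp G A k j x = (if j = i then x else \<one>)"
proof -
  let ?f = "\<lambda>j\<in>{..<k}. if j = i then x else \<one>"
  have f: "?f \<in> PiE {..<k} A"
    using x int_dirprod_subgroup[THEN subgroup.one_closed] by auto
  have xc: "x \<in> carrier G"
    using x i int_dirprod_subset by blast
  have "finprod G ?f {..<k} = finprod G (\<lambda>j. if j = i then x else \<one>) {..<k}"
    using xc by (intro finprod_cong') auto
  also have "\<dots> = x"
    using finprod_singleton_swap[of i "{..<k}" "\<lambda>_. x"] i xc by auto
  finally show ?thesis
    using dp_comp_finprod[OF f, of j] j by simp
qed

lemma mem_subgroup_by_dp_comp:
  assumes M: "subgroup M G" and x: "x \<in> carrier G"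
    and comps: "\<And>i. i < k \<Longrightarrow> dp_comp G A k i x \<in> M"
  shows "x \<in> M"
proof -
  have "finprod G (\<lambda>i. dp_comp G A k i x) {..<k} \<in> M"
    by (rule finprod_in_subgroup[OF M]) (use comps in auto)
  then show ?thesis
    using finprod_dp_comp[OF x] by simp
qed

context
  fixes s :: "nat \<Rightarrow> 'a \<Rightarrow> 'a"
  assumes s: "\<And>j. j < k \<Longrightarrow> s j \<in> hom (G\<lparr>carrier := A j\<rparr>) (G\<lparr>carrier := A j\<rparr>)"
begin

lemma dp_diag_comp_in: "j < k \<Longrightarrow> y \<in> carrier G \<Longrightarrow> s j (dp_comp G A k j y) \<in> A j"
  using hom_in_carrier[OF s] dp_comp_in by fastforce

lemma dp_diag_comp_carrier: "y \<in> carrier G \<Longrightarrow> (\<lambda>j. s j (dp_comp G A k j y)) \<in> {..<k} \<rightarrow> carrier G"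
  using dp_diag_comp_in int_dirprod_subset by blast

lemma dp_comp_dp_diag:
  assumes i: "i < k" and y: "y \<in> carrier G"
  shows "dp_comp G A k i (dp_diag G A k s y) = s i (dp_comp G A k i y)"
proof -
  have "dp_diag G A k s y = finprod G (\<lambda>j\<in>{..<k}. s j (dp_comp G A k j y)) {..<k}"
    unfolding dp_diag_def by (rule finprod_cong') (use dp_diag_comp_carrier[OF y] in auto)
  moreover have "(\<lambda>j\<in>{..<k}. s j (dp_comp G A k j y)) \<in> PiE {..<k} A"
    using dp_diag_comp_in[OF _ y] by auto
  ultimately show ?thesis
    using dp_comp_finprod i by simp
qed

lemma dp_diag_hom: "dp_diag G A k s \<in> hom G G"
proof (rule homI)
  fix y assume "y \<in> carrier G"
  then show "dp_diag G A k s y \<in> carrier G"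
    unfolding dp_diag_def using dp_diag_comp_carrier by (intro finprod_closed) blast
next
  fix y z assume y: "y \<in> carrier G" and z: "z \<in> carrier G"
  have "dp_diag G A k s (y \<otimes> z) =
      finprod G (\<lambda>j. s j (dp_comp G A k j y) \<otimes> s j (dp_comp G A k j z)) {..<k}"
    unfolding dp_diag_def
  proof (rule finprod_cong')
    fix j assume "j \<in> {..<k}"
    then have j: "j < k"
      by simp
    show "s j (dp_comp G A k j (y \<otimes> z)) = s j (dp_comp G A k j y) \<otimes> s j (dp_comp G A k j z)"
      using dp_comp_mult[OF y z j] hom_mult[OF s[OF j]] dp_comp_in[OF y j] dp_comp_in[OF z j] by simp
  qed (use dp_diag_comp_carrier[OF y] dp_diag_comp_carrier[OF z] in auto)
  also have "\<dots> = dp_diag G A k s y \<otimes> dp_diag G A k s z"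
    unfolding dp_diag_def by (rule finprod_multf[OF dp_diag_comp_carrier[OF y] dp_diag_comp_carrier[OF z]])
  finally show "dp_diag G A k s (y \<otimes> z) = dp_diag G A k s y \<otimes> dp_diag G A k s z" .
qed

end

end

end

section \<open>Subgroups of \<open>p\<close>-th powers\<close>

context comm_group
begin

lemma pow_in_pmult: "x \<in> S \<Longrightarrow> x [^] p \<in> pmult G p S"
  unfolding pmult_def by blast

lemma subgroup_pmult:
  assumes "subgroup S G"
  shows "subgroup (pmult G p S) G"
proof -
  have "group_hom G G (\<lambda>x. x [^] p)"
    by (simp add: group_hom_def group_hom_axioms_def is_group pow_hom)
  then show ?thesis
    unfolding pmult_def using group_hom.subgroup_img_is_subgroup assms by blast
qed

lemma pmult_subset: "subgroup S G \<Longrightarrow> pmult G p S \<subseteq> S"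
  unfolding pmult_def using subgroup_nat_pow_closed by blast

lemma hom_pmult:
  assumes u: "u \<in> hom G G" and S: "S \<subseteq> carrier G" and uS: "\<And>x. x \<in> S \<Longrightarrow> u x \<in> S'"
    and w: "w \<in> pmult G p S"
  shows "u w \<in> pmult G p S'"
proof -
  obtain a where a: "a \<in> S" "w = a [^] p"
    using w unfolding pmult_def by blast
  then have "u w = u a [^] p"
    using hom_nat_pow[OF u _ is_group is_group] S by blast
  then show ?thesis
    using uS[OF a(1)] pow_in_pmult by simp
qed

context
  fixes S assumes S: "subgroup S G"
begin

lemma subgroup_pmult_carrier_update: "subgroup (pmult G p S) (G\<lparr>carrier := S\<rparr>)"
  using subgroup_incl[OF subgroup_pmult[OF S] S pmult_subset[OF S]] .

lemma comm_group_quotp: "comm_group (quotp G p S)"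
  using comm_group.abelian_FactGroup[OF subgroup_comm_group[OF S] subgroup_pmult_carrier_update]
  by (simp add: quotp_def)

lemma carrier_quotp: "carrier (quotp G p S) = (\<lambda>a. pmult G p S #> a) ` S"
  by (simp add: quotp_def carrier_FactGroup)

lemma one_quotp: "\<one>\<^bsub>quotp G p S\<^esub> = pmult G p S"
  by (simp add: quotp_def)

lemma rcos_hom_quotp: "(\<lambda>a. pmult G p S #> a) \<in> hom (G\<lparr>carrier := S\<rparr>) (quotp G p S)"
proof -
  interpret S: comm_group "G\<lparr>carrier := S\<rparr>"
    using subgroup_comm_group[OF S] .
  have "pmult G p S \<lhd> G\<lparr>carrier := S\<rparr>"
    using S.normal_iff_subgroup subgroup_pmult_carrier_update by blast
  then have "r_coset (G\<lparr>carrier := S\<rparr>) (pmult G p S) \<in> hom (G\<lparr>carrier := S\<rparr>) (quotp G p S)"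
    using normal.r_coset_hom_Mod by (simp add: quotp_def)
  moreover have "r_coset (G\<lparr>carrier := S\<rparr>) (pmult G p S) = (\<lambda>a. pmult G p S #> a)"
    by (simp add: fun_eq_iff)
  ultimately show ?thesis
    by simp
qed

lemma rcos_mult_quotp:
  "a \<in> S \<Longrightarrow> b \<in> S \<Longrightarrow> (pmult G p S #> a) \<otimes>\<^bsub>quotp G p S\<^esub> (pmult G p S #> b) = pmult G p S #> (a \<otimes> b)"
  using rcos_hom_quotp by (force simp: hom_def)

lemma rcos_pow_quotp:
  assumes a: "a \<in> S"
  shows "(pmult G p S #> a) [^]\<^bsub>quotp G p S\<^esub> (n::nat) = pmult G p S #> (a [^] n)"
proof -
  have "group (quotp G p S)"
    using comm_group_quotp comm_group_def by blast
  then show ?thesis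
    using hom_nat_pow[OF rcos_hom_quotp _ subgroup.subgroup_is_group[OF S is_group]] a by simp
qed

lemma quotp_pow_p:
  assumes Y: "Y \<in> carrier (quotp G p S)"
  shows "Y [^]\<^bsub>quotp G p S\<^esub> p = \<one>\<^bsub>quotp G p S\<^esub>"
proof -
  obtain a where a: "a \<in> S" "Y = pmult G p S #> a"
    using Y carrier_quotp by auto
  then have "Y [^]\<^bsub>quotp G p S\<^esub> p = pmult G p S #> (a [^] p)"
    using rcos_pow_quotp by simp
  also have "\<dots> = pmult G p S"
    using subgroup.rcos_const[OF subgroup_pmult[OF S] is_group pow_in_pmult[OF a(1)]] .
  finally show ?thesis
    by (simp add: one_quotp)
qed

end

lemma subgroup_image_mod_p:
  assumes f: "f \<in> hom G G"
  shows "subgroup (f ` carrier G <#> pmult G p (carrier G)) G"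
proof -
  have "group_hom G G f"
    by (simp add: group_hom_def group_hom_axioms_def is_group f)
  then show ?thesis
    using mult_subgroups group_hom.img_is_subgroup subgroup_pmult[OF subgroup_self] by blast
qed

lemma pmult_subset_image_mod_p:
  assumes f: "f \<in> hom G G"
  shows "pmult G p (carrier G) \<subseteq> f ` carrier G <#> pmult G p (carrier G)"
proof
  fix w assume w: "w \<in> pmult G p (carrier G)"
  then have "w \<in> carrier G"
    using subgroup.subset[OF subgroup_pmult[OF subgroup_self]] by blast
  then have "w = f \<one> \<otimes> w"
    using hom_one[OF f is_group is_group] by simp
  then show "w \<in> f ` carrier G <#> pmult G p (carrier G)"
    using w unfolding set_mult_def by blast
qed

lemma image_subset_image_mod_p:
  assumes f: "f \<in> hom G G" and a: "a \<in> carrier G"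
  shows "f a \<in> f ` carrier G <#> pmult G p (carrier G)"
proof -
  have "\<one> \<in> pmult G p (carrier G)"
    using pow_in_pmult[of \<one> "carrier G" p] by simp
  moreover have "f a = f a \<otimes> \<one>"
    using hom_in_carrier[OF f a] by simp
  ultimately show ?thesis
    using a unfolding set_mult_def by blast
qed

lemma image_mod_ppow:
  assumes f: "f \<in> hom G G" and mod_p: "carrier G \<subseteq> f ` carrier G <#> pmult G p (carrier G)"
    and x: "x \<in> carrier G"
  shows "\<exists>a\<in>carrier G. \<exists>w\<in>carrier G. x = f a \<otimes> w [^] (p ^ n)"
  using x
proof (induction n arbitrary: x)
  case 0
  then have "x = f \<one> \<otimes> x [^] (p ^ 0)"
    using hom_one[OF f is_group is_group] by simp
  then show ?case
    using 0 by blast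
next
  case (Suc n)
  then obtain a w where aw: "a \<in> carrier G" "w \<in> carrier G" "x = f a \<otimes> w [^] (p ^ n)"
    by blast
  obtain b v where bv: "b \<in> carrier G" "v \<in> carrier G" "w = f b \<otimes> v [^] p"
    using mod_p aw(2) unfolding set_mult_def pmult_def by blast
  have fc: "f b \<in> carrier G" "f a \<in> carrier G" "f (b [^] (p ^ n)) \<in> carrier G"
    using f aw bv by (auto simp: hom_def)
  have "w [^] (p ^ n) = f (b [^] (p ^ n)) \<otimes> v [^] (p ^ Suc n)"
    using bv fc hom_nat_pow[OF f bv(1) is_group is_group]
    by (simp add: pow_mult_distrib m_comm nat_pow_pow mult.commute)
  then have "x = f (a \<otimes> b [^] (p ^ n)) \<otimes> v [^] (p ^ Suc n)"
    using aw bv fc f by (simp add: hom_mult m_assoc)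
  then show ?case
    using aw bv by auto
qed

lemma surj_if_surj_mod_pmult:
  assumes p_group: "order G = p ^ N" and f: "f \<in> hom G G"
    and mod_p: "carrier G \<subseteq> f ` carrier G <#> pmult G p (carrier G)"
  shows "f ` carrier G = carrier G"
proof
  show "f ` carrier G \<subseteq> carrier G"
    using f by (auto simp: hom_def)
  show "carrier G \<subseteq> f ` carrier G"
  proof
    fix x assume x: "x \<in> carrier G"
    obtain a w where a: "a \<in> carrier G" and w: "w \<in> carrier G" and x_eq: "x = f a \<otimes> w [^] (p ^ N)"
      using image_mod_ppow[OF f mod_p x] by blast
    have "x = f a"
      using x_eq pow_order_eq_1[OF w] p_group f a by (simp add: hom_def Pi_iff)
    then show "x \<in> f ` carrier G"
      using a by blast
  qed
qed
end

section \<open>Exponents and homocyclic subgroups\<close>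

definition homocyclic_basis ::
    "('a, 'b) monoid_scheme \<Rightarrow> 'a set \<Rightarrow> (nat \<Rightarrow> 'a set) \<Rightarrow> nat \<Rightarrow> (nat \<Rightarrow> 'a) \<Rightarrow> bool" where
  "homocyclic_basis G S C n g \<longleftrightarrow> int_dirprod (G\<lparr>carrier := S\<rparr>) C n \<and>
    (\<forall>l<n. g l \<in> S \<and> C l = {g l [^]\<^bsub>G\<^esub> t | t::nat. True} \<and>
      group.ord G (g l) = grp_exponent (G\<lparr>carrier := S\<rparr>))"

context comm_group
begin

context
  fixes S assumes S: "subgroup S G"
begin

lemma ord_dvd_grp_exponent:
  assumes x: "x \<in> S"
  shows "ord x dvd grp_exponent (G\<lparr>carrier := S\<rparr>)"
proof -
  have "group.ord (G\<lparr>carrier := S\<rparr>) x \<in> group.ord (G\<lparr>carrier := S\<rparr>) ` carrier (G\<lparr>carrier := S\<rparr>)"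
    using x by simp
  then show ?thesis
    unfolding grp_exponent_def ord_in_subgroup[OF S x] by (rule dvd_Lcm)
qed

lemma pow_grp_exponent: "x \<in> S \<Longrightarrow> x [^] grp_exponent (G\<lparr>carrier := S\<rparr>) = \<one>"
  using ord_dvd_grp_exponent pow_eq_id[OF subgroup.mem_carrier[OF S]] by blast

lemma grp_exponent_dvd:
  assumes "\<And>x. x \<in> S \<Longrightarrow> x [^] (n::nat) = \<one>"
  shows "grp_exponent (G\<lparr>carrier := S\<rparr>) dvd n"
  unfolding grp_exponent_def
proof (rule Lcm_least)
  fix d assume "d \<in> group.ord (G\<lparr>carrier := S\<rparr>) ` carrier (G\<lparr>carrier := S\<rparr>)"
  then obtain x where x: "x \<in> S" and d: "d = ord x"
    using ord_in_subgroup[OF S] by auto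
  then show "d dvd n"
    using assms pow_eq_id subgroup.mem_carrier[OF S] by blast
qed

lemma grp_exponent_prime_power:
  assumes p: "Factorial_Ring.prime p" and p_group: "order G = p ^ N"
  shows "\<exists>c. grp_exponent (G\<lparr>carrier := S\<rparr>) = p ^ c"
proof -
  have "grp_exponent (G\<lparr>carrier := S\<rparr>) dvd p ^ N"
    using grp_exponent_dvd[of "order G"] pow_order_eq_1 subgroup.mem_carrier[OF S] p_group by simp
  then show ?thesis
    using divides_primepow_nat[OF p] by blast
qed

lemma subgroup_pow_eq_one: "subgroup {x \<in> S. x [^] (n::nat) = \<one>} G"
proof -
  have "group_hom G G (\<lambda>x. x [^] n)"
    by (simp add: group_hom_def group_hom_axioms_def is_group pow_hom)
  then have "subgroup (S \<inter> kernel G G (\<lambda>x. x [^] n)) G"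
    using subgroup_Int[OF S] group_hom.subgroup_kernel by blast
  moreover have "S \<inter> kernel G G (\<lambda>x. x [^] n) = {x \<in> S. x [^] n = \<one>}"
    using subgroup.subset[OF S] by (auto simp: kernel_def)
  ultimately show ?thesis
    by simp
qed


lemma int_dirprod_pow_eq_one:
  assumes dec: "int_dirprod (G\<lparr>carrier := S\<rparr>) C n"
    and comps: "\<And>l c. l < n \<Longrightarrow> c \<in> C l \<Longrightarrow> c [^] (q::nat) = \<one>" and x: "x \<in> S"
  shows "x [^] q = \<one>"
proof -
  interpret S: comm_group "G\<lparr>carrier := S\<rparr>"
    using subgroup_comm_group[OF S] .
  have M: "subgroup {x \<in> S. x [^] q = \<one>} (G\<lparr>carrier := S\<rparr>)"
    using subgroup_incl[OF subgroup_pow_eq_one S] by blast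
  have "x \<in> {x \<in> S. x [^] q = \<one>}"
  proof (rule S.mem_subgroup_by_dp_comp[OF dec M])
    show "x \<in> carrier (G\<lparr>carrier := S\<rparr>)"
      using x by simp
    fix l assume l: "l < n"
    have "dp_comp (G\<lparr>carrier := S\<rparr>) C n l x \<in> C l"
      using S.dp_comp_in[OF dec _ l] x by simp
    moreover have "C l \<subseteq> S"
      using S.int_dirprod_subset[OF dec l] by simp
    ultimately show "dp_comp (G\<lparr>carrier := S\<rparr>) C n l x \<in> {x \<in> S. x [^] q = \<one>}"
      using comps[OF l] by blast
  qed
  then show ?thesis
    by simp
qed

lemma homocyclic_basis_exists:
  assumes fin: "finite (carrier G)" and hc: "homocyclic G S"
  shows "\<exists>C n g. homocyclic_basis G S C n g"
proof -
  obtain n C where dec: "int_dirprod (G\<lparr>carrier := S\<rparr>) C n"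
    and gen: "\<forall>l<n. \<exists>g\<in>S. C l = generate G {g}" and card: "\<forall>j<n. \<forall>l<n. card (C j) = card (C l)"
    using hc unfolding homocyclic_def by blast
  obtain g where g: "\<And>l. l < n \<Longrightarrow> g l \<in> S" and C: "\<And>l. l < n \<Longrightarrow> C l = generate G {g l}"
    using gen by metis
  have gc: "l < n \<Longrightarrow> g l \<in> carrier G" for l
    using g subgroup.mem_carrier[OF S] by blast
  have powers: "C l = {g l [^] t | t::nat. True}" if "l < n" for l
    using C[OF that] generate_pow_on_finite_carrier[OF fin gc[OF that]] by simp
  have ord_card: "ord (g l) = card (C l)" if "l < n" for l
    using C[OF that] generate_pow_card[OF gc[OF that]] by simp
  have "ord (g l0) = grp_exponent (G\<lparr>carrier := S\<rparr>)" if l0: "l0 < n" for l0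
  proof (rule dvd_antisym)
    show "ord (g l0) dvd grp_exponent (G\<lparr>carrier := S\<rparr>)"
      using ord_dvd_grp_exponent g l0 by blast
    have "x [^] ord (g l0) = \<one>" if x: "x \<in> S" for x
    proof (rule int_dirprod_pow_eq_one[OF dec _ x])
      fix l c assume l: "l < n" and c: "c \<in> C l"
      then obtain t :: nat where t: "c = g l [^] t"
        using powers by auto
      have "ord (g l0) = ord (g l)"
        using ord_card l l0 card by metis
      then have "c [^] ord (g l0) = (g l [^] ord (g l)) [^] t"
        unfolding t by (simp only: nat_pow_pow[OF gc[OF l]] mult.commute)
      then show "c [^] ord (g l0) = \<one>"
        using pow_ord_eq_1[OF gc[OF l]] by simp
    qed
    then show "grp_exponent (G\<lparr>carrier := S\<rparr>) dvd ord (g l0)"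
      by (rule grp_exponent_dvd)
  qed
  then show ?thesis
    unfolding homocyclic_basis_def using dec g powers by blast
qed

context
  fixes C n g
  assumes basis: "homocyclic_basis G S C n g"
begin

lemma basis_dirprod: "int_dirprod (G\<lparr>carrier := S\<rparr>) C n"
  using basis unfolding homocyclic_basis_def by blast

lemma basis_in: "l < n \<Longrightarrow> g l \<in> S"
  using basis unfolding homocyclic_basis_def by blast

lemma basis_powers: "l < n \<Longrightarrow> C l = {g l [^] t | t::nat. True}"
  using basis unfolding homocyclic_basis_def by blast

lemma basis_ord: "l < n \<Longrightarrow> ord (g l) = grp_exponent (G\<lparr>carrier := S\<rparr>)"
  using basis unfolding homocyclic_basis_def by blast

interpretation S: comm_group "G\<lparr>carrier := S\<rparr>"
  using subgroup_comm_group[OF S] .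

lemma basis_gc: "l < n \<Longrightarrow> g l \<in> carrier G"
  using basis_in subgroup.mem_carrier[OF S] by blast

lemma basis_gen_in: "l < n \<Longrightarrow> g l \<in> C l"
proof -
  assume l: "l < n"
  have "g l = g l [^] (1::nat)"
    using basis_gc[OF l] by simp
  then show "g l \<in> C l"
    using basis_powers[OF l] by blast
qed

lemma basis_coordinates:
  assumes x: "x \<in> S"
  obtains t :: "nat \<Rightarrow> nat" where "\<And>l. l < n \<Longrightarrow> dp_comp (G\<lparr>carrier := S\<rparr>) C n l x = g l [^] t l"
proof -
  have "\<exists>t::nat. dp_comp (G\<lparr>carrier := S\<rparr>) C n l x = g l [^] t" if l: "l < n" for l
  proof -
    have "dp_comp (G\<lparr>carrier := S\<rparr>) C n l x \<in> C l"
      using S.dp_comp_in[OF basis_dirprod _ l] x by simp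
    then show ?thesis
      using basis_powers[OF l] by blast
  qed
  then show ?thesis
    using that by metis
qed

lemma basis_expansion:
  fixes t :: "nat \<Rightarrow> nat"
  assumes x: "x \<in> S" and t: "\<And>l. l < n \<Longrightarrow> dp_comp (G\<lparr>carrier := S\<rparr>) C n l x = g l [^] t l"
  shows "x = finprod (G\<lparr>carrier := S\<rparr>) (\<lambda>l. g l [^] t l) {..<n}"
proof -
  have "x = finprod (G\<lparr>carrier := S\<rparr>) (\<lambda>l. dp_comp (G\<lparr>carrier := S\<rparr>) C n l x) {..<n}"
    using S.finprod_dp_comp[OF basis_dirprod] x by simp
  also have "\<dots> = finprod (G\<lparr>carrier := S\<rparr>) (\<lambda>l. g l [^] t l) {..<n}"
    by (rule S.finprod_cong') (use t basis_in subgroup_nat_pow_closed[OF S] in auto)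
  finally show ?thesis .
qed

lemma basis_hom_eqI:
  assumes K: "comm_group K"
    and f1: "f1 \<in> hom (G\<lparr>carrier := S\<rparr>) K" and f2: "f2 \<in> hom (G\<lparr>carrier := S\<rparr>) K"
    and eq: "\<And>l. l < n \<Longrightarrow> f1 (g l) = f2 (g l)" and x: "x \<in> S"
  shows "f1 x = f2 x"
proof -
  interpret K: comm_group K by (fact K)
  obtain t :: "nat \<Rightarrow> nat" where t: "\<And>l. l < n \<Longrightarrow> dp_comp (G\<lparr>carrier := S\<rparr>) C n l x = g l [^] t l"
    using basis_coordinates[OF x] by blast
  have gp: "(\<lambda>l. g l [^] t l) \<in> {..<n} \<rightarrow> carrier (G\<lparr>carrier := S\<rparr>)"
    using basis_in subgroup_nat_pow_closed[OF S] by auto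
  have expand: "f x = finprod K (\<lambda>l. f (g l) [^]\<^bsub>K\<^esub> t l) {..<n}"
    if f: "f \<in> hom (G\<lparr>carrier := S\<rparr>) K" for f
  proof -
    have "f x = f (finprod (G\<lparr>carrier := S\<rparr>) (\<lambda>l. g l [^] t l) {..<n})"
      using basis_expansion[OF x t] by (rule arg_cong)
    also have "\<dots> = finprod K (\<lambda>l. f (g l [^] t l)) {..<n}"
      by (rule S.hom_finprod[OF f K gp])
    also have "\<dots> = finprod K (\<lambda>l. f (g l) [^]\<^bsub>K\<^esub> t l) {..<n}"
    proof (rule K.finprod_cong')
      show "(\<lambda>l. f (g l) [^]\<^bsub>K\<^esub> t l) \<in> {..<n} \<rightarrow> carrier K"
        using f basis_in by (auto simp: hom_def)
      fix l assume "l \<in> {..<n}"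
      then show "f (g l [^] t l) = f (g l) [^]\<^bsub>K\<^esub> t l"
        using hom_nat_pow[OF f _ S.is_group K.is_group, of "g l" "t l"] basis_in by simp
    qed simp
    finally show ?thesis .
  qed
  have "finprod K (\<lambda>l. f1 (g l) [^]\<^bsub>K\<^esub> t l) {..<n} = finprod K (\<lambda>l. f2 (g l) [^]\<^bsub>K\<^esub> t l) {..<n}"
  proof (rule K.finprod_cong')
    show "(\<lambda>l. f2 (g l) [^]\<^bsub>K\<^esub> t l) \<in> {..<n} \<rightarrow> carrier K"
      using f2 basis_in by (auto simp: hom_def)
  qed (use eq in auto)
  then show ?thesis
    using expand[OF f1] expand[OF f2] by simp
qed

lemma basis_pow_transfer:
  assumes l: "l < n" and y: "y \<in> S" and eq: "g l [^] (a::nat) = g l [^] (b::nat)"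
  shows "y [^] a = y [^] b"
proof (rule pow_eq_transfer[OF basis_gc[OF l] _ _ eq])
  show "y \<in> carrier G"
    using y subgroup.mem_carrier[OF S] by blast
  show "y [^] ord (g l) = \<one>"
    using basis_ord[OF l] pow_grp_exponent y by simp
qed

context
  fixes y :: "nat \<Rightarrow> 'a" and t :: "'a \<Rightarrow> nat \<Rightarrow> nat"
  assumes y: "\<And>l. l < n \<Longrightarrow> y l \<in> S"
    and t: "\<And>x l. x \<in> S \<Longrightarrow> l < n \<Longrightarrow> dp_comp (G\<lparr>carrier := S\<rparr>) C n l x = g l [^] t x l"
begin

definition basis_map :: "'a \<Rightarrow> 'a" where
  "basis_map x = finprod (G\<lparr>carrier := S\<rparr>) (\<lambda>l. y l [^] t x l) {..<n}"

lemma basis_map_factors: "(\<lambda>l. y l [^] t x l) \<in> {..<n} \<rightarrow> carrier (G\<lparr>carrier := S\<rparr>)"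
  using y subgroup_nat_pow_closed[OF S] by auto

lemma basis_map_hom: "basis_map \<in> hom (G\<lparr>carrier := S\<rparr>) (G\<lparr>carrier := S\<rparr>)"
proof (rule homI)
  fix x assume "x \<in> carrier (G\<lparr>carrier := S\<rparr>)"
  show "basis_map x \<in> carrier (G\<lparr>carrier := S\<rparr>)"
    unfolding basis_map_def using S.finprod_closed[OF basis_map_factors] .
next
  fix x z assume "x \<in> carrier (G\<lparr>carrier := S\<rparr>)" "z \<in> carrier (G\<lparr>carrier := S\<rparr>)"
  then have x: "x \<in> S" and z: "z \<in> S"
    by simp_all
  have xz: "x \<otimes> z \<in> S"
    using subgroup.m_closed[OF S x z] .
  have split: "y l [^] t (x \<otimes> z) l = y l [^] t x l \<otimes> y l [^] t z l" if l: "l < n" for l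
  proof -
    have "g l [^] t (x \<otimes> z) l = dp_comp (G\<lparr>carrier := S\<rparr>) C n l x \<otimes> dp_comp (G\<lparr>carrier := S\<rparr>) C n l z"
      using t[OF xz l] S.dp_comp_mult[OF basis_dirprod _ _ l, of x z] x z by simp
    also have "\<dots> = g l [^] (t x l + t z l)"
      using t[OF x l] t[OF z l] basis_gc[OF l] by (simp add: nat_pow_mult)
    finally have "y l [^] t (x \<otimes> z) l = y l [^] (t x l + t z l)"
      using basis_pow_transfer[OF l y[OF l]] by blast
    then show ?thesis
      using y[OF l] subgroup.mem_carrier[OF S] by (simp add: nat_pow_mult)
  qed
  have "basis_map (x \<otimes> z) = finprod (G\<lparr>carrier := S\<rparr>) (\<lambda>l. y l [^] t x l \<otimes>\<^bsub>G\<lparr>carrier := S\<rparr>\<^esub> y l [^] t z l) {..<n}"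
    unfolding basis_map_def
    by (rule S.finprod_cong') (use split y subgroup_nat_pow_closed[OF S] subgroup.m_closed[OF S] in auto)
  also have "\<dots> = basis_map x \<otimes>\<^bsub>G\<lparr>carrier := S\<rparr>\<^esub> basis_map z"
    unfolding basis_map_def by (rule S.finprod_multf[OF basis_map_factors basis_map_factors])
  finally show "basis_map (x \<otimes>\<^bsub>G\<lparr>carrier := S\<rparr>\<^esub> z) = basis_map x \<otimes>\<^bsub>G\<lparr>carrier := S\<rparr>\<^esub> basis_map z"
    by simp
qed

lemma basis_map_basis:
  assumes l: "l < n"
  shows "basis_map (g l) = y l"
proof -
  have coord: "y j [^] t (g l) j = (if j = l then y l else \<one>)" if j: "j < n" for j
  proof -
    have "g j [^] t (g l) j = dp_comp (G\<lparr>carrier := S\<rparr>) C n j (g l)"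
      using t[OF basis_in[OF l] j] by simp
    also have "\<dots> = g j [^] (if j = l then 1 else 0 :: nat)"
      using S.dp_comp_of_component[OF basis_dirprod l basis_gen_in[OF l] j] basis_gc[OF j] basis_gc[OF l] by simp
    finally have "y j [^] t (g l) j = y j [^] (if j = l then 1 else 0 :: nat)"
      by (rule basis_pow_transfer[OF j y[OF j]])
    then show ?thesis
      using y[OF j] y[OF l] subgroup.mem_carrier[OF S] by simp
  qed
  have "basis_map (g l) = finprod (G\<lparr>carrier := S\<rparr>) (\<lambda>j. if j = l then y l else \<one>\<^bsub>G\<lparr>carrier := S\<rparr>\<^esub>) {..<n}"
    unfolding basis_map_def
  proof (rule S.finprod_cong')
    show "(\<lambda>j. if j = l then y l else \<one>\<^bsub>G\<lparr>carrier := S\<rparr>\<^esub>) \<in> {..<n} \<rightarrow> carrier (G\<lparr>carrier := S\<rparr>)"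
      using y[OF l] subgroup.one_closed[OF S] by auto
  qed (simp_all add: coord)
  also have "\<dots> = y l"
    using S.finprod_singleton_swap[of l "{..<n}" "\<lambda>_. y l"] l y[OF l] by simp
  finally show ?thesis .
qed

end

lemma basis_hom_exists:
  assumes y: "\<And>l. l < n \<Longrightarrow> y l \<in> S"
  shows "\<exists>s \<in> hom (G\<lparr>carrier := S\<rparr>) (G\<lparr>carrier := S\<rparr>). \<forall>l<n. s (g l) = y l"
proof -
  have "\<forall>x\<in>S. \<exists>t::nat \<Rightarrow> nat. \<forall>l<n. dp_comp (G\<lparr>carrier := S\<rparr>) C n l x = g l [^] t l"
    using basis_coordinates by metis
  then obtain t :: "'a \<Rightarrow> nat \<Rightarrow> nat"
    where t: "\<And>x l. x \<in> S \<Longrightarrow> l < n \<Longrightarrow> dp_comp (G\<lparr>carrier := S\<rparr>) C n l x = g l [^] t x l"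
    by metis
  show ?thesis
    using basis_map_hom[of y t, OF y t] basis_map_basis[of y t, OF y t] by blast
qed

lemma basis_small_pow_in_pmult:
  assumes p: "Factorial_Ring.prime p" and exp: "grp_exponent (G\<lparr>carrier := S\<rparr>) = p ^ b"
    and z: "z \<in> S" and zc: "z [^] (p ^ c) = \<one>" and cb: "c < b"
  shows "z \<in> pmult G p S"
proof (rule S.mem_subgroup_by_dp_comp[OF basis_dirprod subgroup_pmult_carrier_update[OF S]])
  show "z \<in> carrier (G\<lparr>carrier := S\<rparr>)"
    using z by simp
  obtain t :: "nat \<Rightarrow> nat" where t: "\<And>l. l < n \<Longrightarrow> dp_comp (G\<lparr>carrier := S\<rparr>) C n l z = g l [^] t l"
    using basis_coordinates[OF z] by blast
  fix l assume l: "l < n"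
  have cq: "dp_comp (G\<lparr>carrier := S\<rparr>) C n l \<in> hom (G\<lparr>carrier := S\<rparr>) (G\<lparr>carrier := S\<rparr>)"
    using S.dp_comp_hom[OF basis_dirprod l] .
  have "g l [^] (t l * p ^ c) = dp_comp (G\<lparr>carrier := S\<rparr>) C n l (z [^] (p ^ c))"
    using t[OF l] hom_nat_pow[OF cq _ S.is_group S.is_group, of z "p ^ c"] z basis_gc[OF l]
    by (simp add: nat_pow_pow)
  also have "\<dots> = \<one>"
    using zc hom_one[OF cq S.is_group S.is_group] by simp
  finally have "p ^ b dvd t l * p ^ c"
    using pow_eq_id[OF basis_gc[OF l]] basis_ord[OF l] exp by simp
  moreover have "p * p ^ c dvd p ^ b"
    using le_imp_power_dvd[of "Suc c" b p] cb by simp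
  ultimately have "p ^ c * p dvd p ^ c * t l"
    using dvd_trans by (metis mult.commute)
  then have "p dvd t l"
    using prime_gt_0_nat[OF p] by (simp add: nat_mult_dvd_cancel_disj)
  then obtain u where "t l = p * u"
    by blast
  then have "dp_comp (G\<lparr>carrier := S\<rparr>) C n l z = (g l [^] u) [^] p"
    using t[OF l] basis_gc[OF l] by (simp add: nat_pow_pow mult.commute)
  then show "dp_comp (G\<lparr>carrier := S\<rparr>) C n l z \<in> pmult G p S"
    using pow_in_pmult subgroup_nat_pow_closed[OF S basis_in[OF l]] by simp
qed

end

lemma homocyclic_small_pow_in_pmult:
  assumes "finite (carrier G)" and "homocyclic G S" and "Factorial_Ring.prime p"
    and "grp_exponent (G\<lparr>carrier := S\<rparr>) = p ^ b"
    and "z \<in> S" and "z [^] (p ^ c) = \<one>" and "c < b"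
  shows "z \<in> pmult G p S"
proof -
  obtain C n g where "homocyclic_basis G S C n g"
    using homocyclic_basis_exists[OF assms(1,2)] by blast
  from basis_small_pow_in_pmult[OF this assms(3-)] show ?thesis .
qed

lemma homocyclic_lift_quotp_hom:
  assumes "finite (carrier G)" and "homocyclic G S"
    and \<psi>: "\<psi> \<in> hom (quotp G p S) (quotp G p S)"
  shows "\<exists>s \<in> hom (G\<lparr>carrier := S\<rparr>) (G\<lparr>carrier := S\<rparr>).
           \<forall>x\<in>S. \<psi> (pmult G p S #> x) = pmult G p S #> s x"
proof -
  obtain C n g where basis: "homocyclic_basis G S C n g"
    using homocyclic_basis_exists[OF assms(1,2)] by blast
  let ?\<rho> = "\<lambda>a. pmult G p S #> a"
  have \<rho>: "?\<rho> \<in> hom (G\<lparr>carrier := S\<rparr>) (quotp G p S)"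
    using rcos_hom_quotp[OF S] .
  have "\<exists>y. y \<in> S \<and> \<psi> (?\<rho> (g l)) = ?\<rho> y" if "l < n" for l
  proof -
    have "\<psi> (?\<rho> (g l)) \<in> carrier (quotp G p S)"
      using \<psi> \<rho> basis_in[OF basis that] by (auto simp: hom_def)
    then show ?thesis
      using carrier_quotp[OF S] by auto
  qed
  then obtain y where y: "\<And>l. l < n \<Longrightarrow> y l \<in> S \<and> \<psi> (?\<rho> (g l)) = ?\<rho> (y l)"
    by metis
  obtain s where s: "s \<in> hom (G\<lparr>carrier := S\<rparr>) (G\<lparr>carrier := S\<rparr>)" "\<forall>l<n. s (g l) = y l"
    using basis_hom_exists[OF basis] y by blast
  have on_basis: "\<psi> (?\<rho> (g l)) = ?\<rho> (s (g l))" if "l < n" for l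
    using y s(2) that by simp
  have "\<psi> (?\<rho> x) = ?\<rho> (s x)" if "x \<in> S" for x
    using basis_hom_eqI[OF basis comm_group_quotp[OF S]
        hom_compose_fun[OF \<rho> \<psi>] hom_compose_fun[OF s(1) \<rho>] on_basis that] .
  then show ?thesis
    using s(1) by blast
qed

end

end

section \<open>Representations, intertwiners and averaging\<close>

lemma carrier_AutoGroup [simp]: "carrier (AutoGroup M) = auto M"
  by (simp add: AutoGroup_def)

lemma mult_AutoGroup:
  "f \<in> auto M \<Longrightarrow> g \<in> auto M \<Longrightarrow> f \<otimes>\<^bsub>AutoGroup M\<^esub> g = compose (carrier M) f g"
  by (simp add: AutoGroup_def BijGroup_def auto_def)

lemma one_AutoGroup: "\<one>\<^bsub>AutoGroup M\<^esub> = (\<lambda>x\<in>carrier M. x)"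
  by (simp add: AutoGroup_def BijGroup_def)

lemma auto_imp_hom: "f \<in> auto M \<Longrightarrow> f \<in> hom M M"
  by (simp add: auto_def)

lemma (in group) restrict_surj_hom_auto:
  assumes fin: "finite (carrier G)" and f: "f \<in> hom G G" and surj: "f ` carrier G = carrier G"
  shows "restrict f (carrier G) \<in> auto G"
proof -
  have "inj_on f (carrier G)"
    using eq_card_imp_inj_on[OF fin, of f] surj by simp
  then have "bij_betw (restrict f (carrier G)) (carrier G) (carrier G)"
    using surj bij_betw_cong[of "carrier G" "restrict f (carrier G)" f] by (simp add: bij_betw_def)
  moreover have "restrict f (carrier G) \<in> hom G G"
    by (rule hom_restrict[OF f]) simp
  ultimately show ?thesis
    unfolding auto_def Bij_def by simp
qed

lemma mult_AutoGroup_eq_iff: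
  assumes "f \<in> auto M" "g \<in> auto M" "f' \<in> auto M" "g' \<in> auto M"
  shows "f \<otimes>\<^bsub>AutoGroup M\<^esub> g = f' \<otimes>\<^bsub>AutoGroup M\<^esub> g' \<longleftrightarrow> (\<forall>x\<in>carrier M. f (g x) = f' (g' x))"
proof -
  have "compose (carrier M) f g = compose (carrier M) f' g' \<longleftrightarrow> (\<forall>x\<in>carrier M. f (g x) = f' (g' x))"
  proof
    assume "compose (carrier M) f g = compose (carrier M) f' g'"
    then show "\<forall>x\<in>carrier M. f (g x) = f' (g' x)"
      by (metis compose_eq)
  next
    assume "\<forall>x\<in>carrier M. f (g x) = f' (g' x)"
    then show "compose (carrier M) f g = compose (carrier M) f' g'"
      by (intro extensionalityI[OF compose_extensional compose_extensional]) (simp add: compose_eq)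
  qed
  then show ?thesis
    using assms by (simp add: mult_AutoGroup)
qed

lemma (in group) AutoGroup_inv_apply:
  assumes f: "f \<in> auto G" and x: "x \<in> carrier G"
  shows "f ((inv\<^bsub>AutoGroup G\<^esub> f) x) = x" and "(inv\<^bsub>AutoGroup G\<^esub> f) (f x) = x"
proof -
  interpret Aut: group "AutoGroup G"
    by (rule AutoGroup)
  have g: "inv\<^bsub>AutoGroup G\<^esub> f \<in> auto G"
    using Aut.inv_closed f by simp
  have r: "compose (carrier G) f (inv\<^bsub>AutoGroup G\<^esub> f) = (\<lambda>x\<in>carrier G. x)"
    using Aut.r_inv f mult_AutoGroup[OF f g] by (simp add: one_AutoGroup)
  show "f ((inv\<^bsub>AutoGroup G\<^esub> f) x) = x"
    using fun_cong[OF r, of x] x by (simp add: compose_def)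
  have l: "compose (carrier G) (inv\<^bsub>AutoGroup G\<^esub> f) f = (\<lambda>x\<in>carrier G. x)"
    using Aut.l_inv f mult_AutoGroup[OF g f] by (simp add: one_AutoGroup)
  show "(inv\<^bsub>AutoGroup G\<^esub> f) (f x) = x"
    using fun_cong[OF l, of x] x by (simp add: compose_def)
qed

lemma (in group) conj_eq_iff_commute:
  assumes "\<psi> \<in> carrier G" "a \<in> carrier G" "b \<in> carrier G"
  shows "b = inv \<psi> \<otimes> a \<otimes> \<psi> \<longleftrightarrow> \<psi> \<otimes> b = a \<otimes> \<psi>"
  using assms inv_solve_left[of b \<psi> "a \<otimes> \<psi>"] by (auto simp: m_assoc)

lemma rep_equiv_iff_intertwiner:
  assumes K: "group K" and \<alpha>: "\<alpha> \<in> carrier H \<rightarrow> carrier K" and \<beta>: "\<beta> \<in> carrier H \<rightarrow> carrier K"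
  shows "rep_equiv H K \<alpha> \<beta> \<longleftrightarrow>
    (\<exists>\<psi>\<in>carrier K. \<forall>h\<in>carrier H. \<psi> \<otimes>\<^bsub>K\<^esub> \<beta> h = \<alpha> h \<otimes>\<^bsub>K\<^esub> \<psi>)"
proof -
  have "\<beta> h = inv\<^bsub>K\<^esub> \<psi> \<otimes>\<^bsub>K\<^esub> \<alpha> h \<otimes>\<^bsub>K\<^esub> \<psi> \<longleftrightarrow> \<psi> \<otimes>\<^bsub>K\<^esub> \<beta> h = \<alpha> h \<otimes>\<^bsub>K\<^esub> \<psi>"
    if "\<psi> \<in> carrier K" "h \<in> carrier H" for \<psi> h
    using group.conj_eq_iff_commute[OF K that(1)] \<alpha> \<beta> that(2) by blast
  then show ?thesis
    unfolding rep_equiv_def by blast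
qed

lemma rep_equiv_hom_image:
  assumes K: "group K" and K': "group K'" and \<Lambda>: "\<Lambda> \<in> hom K K'"
    and \<alpha>: "\<alpha> \<in> carrier H \<rightarrow> carrier K" and \<beta>: "\<beta> \<in> carrier H \<rightarrow> carrier K"
    and equiv: "rep_equiv H K \<alpha> \<beta>"
  shows "rep_equiv H K' (\<lambda>h. \<Lambda> (\<alpha> h)) (\<lambda>h. \<Lambda> (\<beta> h))"
proof -
  have \<Lambda>c: "\<Lambda> \<in> carrier K \<rightarrow> carrier K'"
    using \<Lambda> by (simp add: hom_def)
  obtain \<psi> where \<psi>: "\<psi> \<in> carrier K" and int: "\<And>h. h \<in> carrier H \<Longrightarrow> \<psi> \<otimes>\<^bsub>K\<^esub> \<beta> h = \<alpha> h \<otimes>\<^bsub>K\<^esub> \<psi>"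
    using equiv rep_equiv_iff_intertwiner[OF K \<alpha> \<beta>] by blast
  have "\<Lambda> \<psi> \<otimes>\<^bsub>K'\<^esub> \<Lambda> (\<beta> h) = \<Lambda> (\<alpha> h) \<otimes>\<^bsub>K'\<^esub> \<Lambda> \<psi>" if h: "h \<in> carrier H" for h
    using int[OF h] \<psi> \<alpha> \<beta> h hom_mult[OF \<Lambda>] by (metis PiE)
  moreover have "\<Lambda> \<psi> \<in> carrier K'"
    using \<Lambda>c \<psi> by blast
  moreover have "(\<lambda>h. \<Lambda> (\<alpha> h)) \<in> carrier H \<rightarrow> carrier K'" "(\<lambda>h. \<Lambda> (\<beta> h)) \<in> carrier H \<rightarrow> carrier K'"
    using \<alpha> \<beta> \<Lambda>c by auto
  ultimately show ?thesis
    using rep_equiv_iff_intertwiner[OF K'] by blast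
qed

lemma rep_equiv_AutoGroup_iff:
  assumes M: "group M" and \<alpha>: "\<alpha> \<in> carrier H \<rightarrow> auto M" and \<beta>: "\<beta> \<in> carrier H \<rightarrow> auto M"
  shows "rep_equiv H (AutoGroup M) \<alpha> \<beta> \<longleftrightarrow>
    (\<exists>\<psi>\<in>auto M. \<forall>h\<in>carrier H. \<forall>x\<in>carrier M. \<psi> (\<beta> h x) = \<alpha> h (\<psi> x))"
proof -
  have "rep_equiv H (AutoGroup M) \<alpha> \<beta> \<longleftrightarrow>
      (\<exists>\<psi>\<in>auto M. \<forall>h\<in>carrier H. \<psi> \<otimes>\<^bsub>AutoGroup M\<^esub> \<beta> h = \<alpha> h \<otimes>\<^bsub>AutoGroup M\<^esub> \<psi>)"
    using rep_equiv_iff_intertwiner[OF group.AutoGroup[OF M]] \<alpha> \<beta> by simp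
  also have "\<dots> \<longleftrightarrow> (\<exists>\<psi>\<in>auto M. \<forall>h\<in>carrier H. \<forall>x\<in>carrier M. \<psi> (\<beta> h x) = \<alpha> h (\<psi> x))"
    by (intro bex_cong[OF refl] ball_cong[OF refl] mult_AutoGroup_eq_iff) (use \<alpha> \<beta> in auto)
  finally show ?thesis .
qed

(* The sum \<Sum>_h \<alpha>(h) S \<beta>(h)\<inverse>, written multiplicatively; instead of dividing by |H| one later
   takes an m-th power with m |H| \<equiv> 1 (mod p). *)
definition rep_average ::
    "('a, 'b) monoid_scheme \<Rightarrow> ('h, 'c) monoid_scheme \<Rightarrow> ('h \<Rightarrow> 'a \<Rightarrow> 'a) \<Rightarrow> ('h \<Rightarrow> 'a \<Rightarrow> 'a)
      \<Rightarrow> ('a \<Rightarrow> 'a) \<Rightarrow> 'a \<Rightarrow> 'a" where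
  "rep_average G H \<alpha> \<beta> S y = finprod G (\<lambda>h. \<alpha> h (S (\<beta> (inv\<^bsub>H\<^esub> h) y))) (carrier H)"

context comm_group
begin

lemma rep_apply_hom:
  assumes "\<rho> \<in> hom H (AutoGroup G)" and "h \<in> carrier H"
  shows "\<rho> h \<in> hom G G"
proof -
  have "\<rho> h \<in> auto G"
    using assms unfolding hom_def by auto
  then show ?thesis
    by (rule auto_imp_hom)
qed

lemma rep_apply_mult:
  assumes \<rho>: "\<rho> \<in> hom H (AutoGroup G)" and h: "h \<in> carrier H" and g: "g \<in> carrier H"
    and x: "x \<in> carrier G"
  shows "\<rho> (h \<otimes>\<^bsub>H\<^esub> g) x = \<rho> h (\<rho> g x)"
proof -
  have "\<rho> h \<in> auto G" "\<rho> g \<in> auto G"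
    using \<rho> h g by (auto simp: hom_def)
  then have "\<rho> (h \<otimes>\<^bsub>H\<^esub> g) = compose (carrier G) (\<rho> h) (\<rho> g)"
    using \<rho> h g by (simp add: hom_mult mult_AutoGroup)
  then show ?thesis
    using x by (simp add: compose_def)
qed

lemma rep_apply_one:
  assumes H: "group H" and \<rho>: "\<rho> \<in> hom H (AutoGroup G)" and x: "x \<in> carrier G"
  shows "\<rho> \<one>\<^bsub>H\<^esub> x = x"
  using hom_one[OF \<rho> H AutoGroup] x by (simp add: one_AutoGroup)

lemma rep_apply_inv:
  assumes H: "group H" and \<rho>: "\<rho> \<in> hom H (AutoGroup G)" and h: "h \<in> carrier H" and x: "x \<in> carrier G"
  shows "\<rho> (inv\<^bsub>H\<^esub> h) (\<rho> h x) = x"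
  using rep_apply_mult[OF \<rho> _ h x, of "inv\<^bsub>H\<^esub> h"] rep_apply_one[OF H \<rho> x] H h
  by (simp add: group.l_inv)

lemma auto_intertwiner_if_surj:
  assumes \<beta>: "\<beta> \<in> hom H (AutoGroup G)" and fin: "finite (carrier G)" and T: "T \<in> hom G G" and surj: "T ` carrier G = carrier G"
    and intertwines: "\<And>h x. h \<in> carrier H \<Longrightarrow> x \<in> carrier G \<Longrightarrow> T (\<beta> h x) = \<alpha> h (T x)"
  shows "\<exists>T'\<in>auto G. \<forall>h\<in>carrier H. \<forall>x\<in>carrier G. T' (\<beta> h x) = \<alpha> h (T' x)"
proof
  show "restrict T (carrier G) \<in> auto G"
    by (rule restrict_surj_hom_auto[OF fin T surj])
  show "\<forall>h\<in>carrier H. \<forall>x\<in>carrier G. restrict T (carrier G) (\<beta> h x) = \<alpha> h (restrict T (carrier G) x)"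
  proof (intro ballI)
    fix h x assume h: "h \<in> carrier H" and x: "x \<in> carrier G"
    have "\<beta> h x \<in> carrier G"
      using hom_in_carrier[OF rep_apply_hom[OF \<beta> h] x] .
    then show "restrict T (carrier G) (\<beta> h x) = \<alpha> h (restrict T (carrier G) x)"
      using intertwines[OF h x] x by simp
  qed
qed

context
  fixes H :: "('h, 'c) monoid_scheme" and \<alpha> \<beta> :: "'h \<Rightarrow> 'a \<Rightarrow> 'a" and S :: "'a \<Rightarrow> 'a"
  assumes H: "group H" and \<alpha>: "\<alpha> \<in> hom H (AutoGroup G)" and \<beta>: "\<beta> \<in> hom H (AutoGroup G)"
    and S: "S \<in> hom G G"
begin

lemma rep_average_term_hom: "h \<in> carrier H \<Longrightarrow> (\<lambda>y. \<alpha> h (S (\<beta> (inv\<^bsub>H\<^esub> h) y))) \<in> hom G G"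
  using hom_compose_fun[OF hom_compose_fun[OF rep_apply_hom[OF \<beta>] S] rep_apply_hom[OF \<alpha>]] H
  by (simp add: group.inv_closed)

lemma rep_average_hom: "rep_average G H \<alpha> \<beta> S \<in> hom G G"
proof (rule homI)
  fix y assume "y \<in> carrier G"
  then show "rep_average G H \<alpha> \<beta> S y \<in> carrier G"
    using rep_average_term_hom unfolding rep_average_def by (auto simp: hom_def intro!: finprod_closed)
next
  fix y z assume y: "y \<in> carrier G" and z: "z \<in> carrier G"
  let ?F = "\<lambda>y h. \<alpha> h (S (\<beta> (inv\<^bsub>H\<^esub> h) y))"
  have F: "?F y \<in> carrier H \<rightarrow> carrier G" "?F z \<in> carrier H \<rightarrow> carrier G"
    using rep_average_term_hom y z by (auto simp: hom_def)
  have "rep_average G H \<alpha> \<beta> S (y \<otimes> z) = finprod G (\<lambda>h. ?F y h \<otimes> ?F z h) (carrier H)"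
    unfolding rep_average_def
  proof (rule finprod_cong')
    fix h assume h: "h \<in> carrier H"
    show "?F (y \<otimes> z) h = ?F y h \<otimes> ?F z h"
      using hom_mult[OF rep_average_term_hom[OF h] y z] by simp
  qed (use F in auto)
  also have "\<dots> = rep_average G H \<alpha> \<beta> S y \<otimes> rep_average G H \<alpha> \<beta> S z"
    unfolding rep_average_def by (rule finprod_multf[OF F])
  finally show "rep_average G H \<alpha> \<beta> S (y \<otimes> z) = rep_average G H \<alpha> \<beta> S y \<otimes> rep_average G H \<alpha> \<beta> S z" .
qed

lemma rep_average_intertwines:
  assumes g: "g \<in> carrier H" and y: "y \<in> carrier G"
  shows "rep_average G H \<alpha> \<beta> S (\<beta> g y) = \<alpha> g (rep_average G H \<alpha> \<beta> S y)"
proof -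
  interpret H: group H by (fact H)
  let ?F = "\<lambda>h. \<alpha> h (S (\<beta> (inv\<^bsub>H\<^esub> h) y))"
  have F: "?F \<in> carrier H \<rightarrow> carrier G"
    using rep_average_term_hom y by (auto simp: hom_def)
  have \<beta>gy: "\<beta> g y \<in> carrier G"
    using rep_apply_hom[OF \<beta> g] y by (auto simp: hom_def)
  have shift: "\<alpha> (g \<otimes>\<^bsub>H\<^esub> h) (S (\<beta> (inv\<^bsub>H\<^esub> (g \<otimes>\<^bsub>H\<^esub> h)) (\<beta> g y))) = \<alpha> g (?F h)"
    if h: "h \<in> carrier H" for h
  proof -
    have "\<beta> (inv\<^bsub>H\<^esub> (g \<otimes>\<^bsub>H\<^esub> h)) (\<beta> g y) = \<beta> (inv\<^bsub>H\<^esub> h) (\<beta> (inv\<^bsub>H\<^esub> g) (\<beta> g y))"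
      using g h \<beta>gy by (simp add: H.inv_mult_group rep_apply_mult[OF \<beta>])
    also have "\<dots> = \<beta> (inv\<^bsub>H\<^esub> h) y"
      using rep_apply_inv[OF H \<beta> g y] by simp
    moreover have "S (\<beta> (inv\<^bsub>H\<^esub> h) y) \<in> carrier G"
      using hom_in_carrier[OF S] hom_in_carrier[OF rep_apply_hom[OF \<beta>]] h y H by (simp add: group.inv_closed)
    ultimately show ?thesis
      using rep_apply_mult[OF \<alpha> g h] by simp
  qed
  have "rep_average G H \<alpha> \<beta> S (\<beta> g y) =
      finprod G (\<lambda>h. \<alpha> h (S (\<beta> (inv\<^bsub>H\<^esub> h) (\<beta> g y)))) ((\<lambda>h. g \<otimes>\<^bsub>H\<^esub> h) ` carrier H)"
    unfolding rep_average_def using H.surj_const_mult[OF g] by simp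
  also have "\<dots> = finprod G (\<lambda>h. \<alpha> (g \<otimes>\<^bsub>H\<^esub> h) (S (\<beta> (inv\<^bsub>H\<^esub> (g \<otimes>\<^bsub>H\<^esub> h)) (\<beta> g y)))) (carrier H)"
    by (rule finprod_reindex)
      (use rep_average_term_hom \<beta>gy H.inj_on_cmult[OF g] H.surj_const_mult[OF g] in \<open>auto simp: hom_def\<close>)
  also have "\<dots> = finprod G (\<lambda>h. \<alpha> g (?F h)) (carrier H)"
    by (rule finprod_cong') (use shift rep_apply_hom[OF \<alpha> g] F in \<open>auto simp: hom_def\<close>)
  also have "\<dots> = \<alpha> g (rep_average G H \<alpha> \<beta> S y)"
    unfolding rep_average_def using hom_finprod[OF rep_apply_hom[OF \<alpha> g] comm_group_axioms F] by simp
  finally show ?thesis .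
qed

end

end

section \<open>The reduction maps \<open>\<Lambda>\<^sub>i\<close>\<close>

locale homocyclic_decomposition = comm_group +
  fixes A :: "nat \<Rightarrow> 'a set" and k p :: nat
  assumes finite_carrier: "finite (carrier G)"
    and prime_p: "Factorial_Ring.prime p"
    and p_group: "\<exists>N. order G = p ^ N"
    and decomposition: "int_dirprod G A k"
    and homocyclic_components: "i < k \<Longrightarrow> homocyclic G (A i)"
    and distinct_exponents: "i < k \<Longrightarrow> j < k \<Longrightarrow> i \<noteq> j \<Longrightarrow>
      grp_exponent (G\<lparr>carrier := A i\<rparr>) \<noteq> grp_exponent (G\<lparr>carrier := A j\<rparr>)"
begin

abbreviation "pA i \<equiv> pmult G p (A i)"
abbreviation "Q i \<equiv> quotp G p (A i)"
abbreviation "\<pi> i \<equiv> dp_comp G A k i"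
abbreviation "\<Lambda> i \<equiv> Lambda_i G p A k i"
abbreviation "expo i \<equiv> grp_exponent (G\<lparr>carrier := A i\<rparr>)"

lemmas A_subgroup = int_dirprod_subgroup[OF decomposition]
lemmas A_subset = int_dirprod_subset[OF decomposition]
lemmas \<pi>_in = dp_comp_in[OF decomposition]
lemmas \<pi>_carrier = dp_comp_carrier[OF decomposition]
lemmas \<pi>_mult = dp_comp_mult[OF decomposition]
lemmas \<pi>_hom = dp_comp_hom[OF decomposition]
lemmas \<pi>_of_component = dp_comp_of_component[OF decomposition]

lemma pA_subgroup: "i < k \<Longrightarrow> subgroup (pA i) G"
  using subgroup_pmult[OF A_subgroup] .

lemma comm_group_Q: "i < k \<Longrightarrow> comm_group (Q i)"
  using comm_group_quotp[OF A_subgroup] .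

lemma group_Q: "i < k \<Longrightarrow> group (Q i)"
  using comm_group_Q comm_group_def by blast

lemma \<pi>_hom_component: "i < k \<Longrightarrow> \<pi> i \<in> hom G (G\<lparr>carrier := A i\<rparr>)"
  by (rule homI) (simp_all add: \<pi>_in \<pi>_mult)

definition reduce :: "nat \<Rightarrow> 'a \<Rightarrow> 'a set" where
  "reduce i x = pA i #> \<pi> i x"

lemma reduce_hom: "i < k \<Longrightarrow> reduce i \<in> hom G (Q i)"
  unfolding reduce_def using hom_compose_fun[OF \<pi>_hom_component rcos_hom_quotp[OF A_subgroup]] .

lemma reduce_component: "i < k \<Longrightarrow> a \<in> A i \<Longrightarrow> reduce i a = pA i #> a"
  unfolding reduce_def using \<pi>_of_component by simp

lemma reduce_pA_eq_one:
  assumes i: "i < k" and w: "w \<in> pmult G p (carrier G)"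
  shows "reduce i w = \<one>\<^bsub>Q i\<^esub>"
proof -
  obtain b where b: "b \<in> carrier G" "w = b [^] p"
    using w unfolding pmult_def by blast
  have "reduce i w = reduce i b [^]\<^bsub>Q i\<^esub> p"
    using hom_nat_pow[OF reduce_hom[OF i] b(1) is_group group_Q[OF i]] b(2) by simp
  also have "\<dots> = \<one>\<^bsub>Q i\<^esub>"
    using quotp_pow_p[OF A_subgroup[OF i]] hom_in_carrier[OF reduce_hom[OF i] b(1)] by simp
  finally show ?thesis .
qed

lemma expo_prime_power: "i < k \<Longrightarrow> \<exists>c. expo i = p ^ c"
  using grp_exponent_prime_power[OF A_subgroup prime_p] p_group by blast

lemma pow_expo: "i < k \<Longrightarrow> x \<in> A i \<Longrightarrow> x [^] expo i = \<one>"
  using pow_grp_exponent[OF A_subgroup] .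

lemma killed_by_smaller_exponent:
  assumes i: "i < k" and j: "j < k" and lt: "expo i < expo j"
    and z: "z \<in> A j" and kill: "z [^] expo i = \<one>"
  shows "z \<in> pA j"
proof -
  obtain c b where c: "expo i = p ^ c" and b: "expo j = p ^ b"
    using expo_prime_power i j by metis
  have "c < b"
    using lt prime_gt_1_nat[OF prime_p] by (simp add: c b)
  then show ?thesis
    using homocyclic_small_pow_in_pmult[OF A_subgroup[OF j] finite_carrier homocyclic_components[OF j]
        prime_p b z] kill c by simp
qed

lemma hom_into_larger_exponent:
  assumes i: "i < k" and j: "j < k" and lt: "expo i < expo j"
    and u: "u \<in> hom G G" and x: "x \<in> A i" and ux: "u x \<in> A j"
  shows "u x \<in> pA j"
proof (rule killed_by_smaller_exponent[OF i j lt ux])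
  have "x \<in> carrier G"
    using x A_subset[OF i] by blast
  then show "u x [^] expo i = \<one>"
    using hom_nat_pow[OF u _ is_group is_group] hom_one[OF u is_group is_group] pow_expo[OF i x]
    by metis
qed

lemma off_diagonal_in_pA:
  assumes i: "i < k" and j: "j < k" and ij: "i \<noteq> j"
    and u: "u \<in> hom G G" and v: "v \<in> hom G G"
    and uA: "\<And>x. x \<in> A i \<Longrightarrow> u x \<in> A j" and vA: "\<And>y. y \<in> A j \<Longrightarrow> v y \<in> A i"
    and x: "x \<in> A i"
  shows "v (u x) \<in> pA i"
proof -
  consider "expo i < expo j" | "expo j < expo i"
    using distinct_exponents[OF i j ij] by linarith
  then show ?thesis
  proof cases
    case 1
    then have "u x \<in> pA j"
      using hom_into_larger_exponent[OF i j _ u x uA[OF x]] by blast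
    then show ?thesis
      using hom_pmult[OF v A_subset[OF j] vA] by blast
  next
    case 2
    show ?thesis
      using hom_into_larger_exponent[OF j i 2 v uA[OF x] vA[OF uA[OF x]]] .
  qed
qed

(* Modulo pA_i only the diagonal entry of f contributes; this makes \<Lambda>_i multiplicative. *)
lemma reduce_comp_component:
  assumes i: "i < k" and f: "f \<in> hom G G" and g: "g \<in> hom G G" and x: "x \<in> A i"
  shows "reduce i (f (g x)) = reduce i (f (\<pi> i (g x)))"
proof -
  interpret Q: comm_group "Q i"
    using comm_group_Q[OF i] .
  have y: "g x \<in> carrier G"
    using hom_in_carrier[OF g] x A_subset[OF i] by blast
  have rf: "(\<lambda>z. reduce i (f z)) \<in> hom G (Q i)"
    using hom_compose_fun[OF f reduce_hom[OF i]] .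
  have comps: "(\<lambda>j. \<pi> j (g x)) \<in> {..<k} \<rightarrow> carrier G"
    using \<pi>_carrier[OF y] by auto
  have diag: "reduce i (f (\<pi> i (g x))) \<in> carrier (Q i)"
    using hom_in_carrier[OF rf \<pi>_carrier[OF y i]] .
  have off: "reduce i (f (\<pi> j (g x))) = \<one>\<^bsub>Q i\<^esub>" if j: "j < k" and ji: "j \<noteq> i" for j
  proof -
    have "\<pi> i (f (\<pi> j (g x))) \<in> pA i"
      using off_diagonal_in_pA[OF i j ji[symmetric] hom_compose_fun[OF g \<pi>_hom[OF j]]
          hom_compose_fun[OF f \<pi>_hom[OF i]] _ _ x]
        \<pi>_in hom_in_carrier[OF g] hom_in_carrier[OF f] A_subset i j by blast
    then show ?thesis
      unfolding reduce_def
      using subgroup.rcos_const[OF pA_subgroup[OF i] is_group] one_quotp[OF A_subgroup[OF i]] by simp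
  qed
  have "reduce i (f (g x)) = reduce i (f (finprod G (\<lambda>j. \<pi> j (g x)) {..<k}))"
    using finprod_dp_comp[OF decomposition y] by simp
  also have "\<dots> = finprod (Q i) (\<lambda>j. reduce i (f (\<pi> j (g x)))) {..<k}"
    using hom_finprod[OF rf comm_group_Q[OF i] comps] .
  also have "\<dots> = finprod (Q i) (\<lambda>j. if j = i then reduce i (f (\<pi> i (g x))) else \<one>\<^bsub>Q i\<^esub>) {..<k}"
    by (rule Q.finprod_cong') (use off diag in auto)
  also have "\<dots> = reduce i (f (\<pi> i (g x)))"
    using Q.finprod_singleton_swap[of i "{..<k}" "\<lambda>_. reduce i (f (\<pi> i (g x)))"] i diag by simp
  finally show ?thesis .
qed

lemma Lambda_coset:
  assumes i: "i < k" and \<phi>: "\<phi> \<in> hom G G" and a: "a \<in> A i"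
  shows "\<Lambda> i \<phi> (pA i #> a) = reduce i (\<phi> a)"
proof -
  interpret Q: group "Q i"
    using group_Q[OF i] .
  have ac: "a \<in> carrier G"
    using a A_subset[OF i] by blast
  let ?x = "SOME x. x \<in> pA i #> a"
  have "?x \<in> pA i #> a"
    using rcos_self[OF ac pA_subgroup[OF i]] by (rule someI)
  then obtain w where w: "w \<in> pA i" and x: "?x = w \<otimes> a"
    unfolding r_coset_def by blast
  have wc: "w \<in> carrier G"
    using w subgroup.subset[OF pA_subgroup[OF i]] by blast
  have "w \<in> pmult G p (carrier G)"
    using w A_subset[OF i] unfolding pmult_def by blast
  then have "\<phi> w \<in> pmult G p (carrier G)"
    using hom_pmult[OF \<phi>] hom_in_carrier[OF \<phi>] by blast
  then have one: "reduce i (\<phi> w) = \<one>\<^bsub>Q i\<^esub>"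
    by (rule reduce_pA_eq_one[OF i])
  have "\<Lambda> i \<phi> (pA i #> a) = reduce i (\<phi> ?x)"
    unfolding Lambda_i_def reduce_def using a carrier_quotp[OF A_subgroup[OF i]] by simp
  also have "\<dots> = reduce i (\<phi> w) \<otimes>\<^bsub>Q i\<^esub> reduce i (\<phi> a)"
    using x hom_mult[OF hom_compose_fun[OF \<phi> reduce_hom[OF i]] wc ac] by simp
  also have "\<dots> = reduce i (\<phi> a)"
    using one hom_in_carrier[OF hom_compose_fun[OF \<phi> reduce_hom[OF i]] ac] by simp
  finally show ?thesis .
qed

lemma Lambda_in_carrier:
  assumes i: "i < k" and \<phi>: "\<phi> \<in> hom G G" and Y: "Y \<in> carrier (Q i)"
  shows "\<Lambda> i \<phi> Y \<in> carrier (Q i)"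
proof -
  obtain a where a: "a \<in> A i" "Y = pA i #> a"
    using Y carrier_quotp[OF A_subgroup[OF i]] by auto
  then show ?thesis
    using Lambda_coset[OF i \<phi> a(1)] hom_in_carrier[OF reduce_hom[OF i] hom_in_carrier[OF \<phi>]]
      A_subset[OF i] by auto
qed

lemma Lambda_comp:
  assumes i: "i < k" and \<phi>: "\<phi> \<in> hom G G" and \<psi>: "\<psi> \<in> hom G G" and Y: "Y \<in> carrier (Q i)"
  shows "\<Lambda> i \<phi> (\<Lambda> i \<psi> Y) = \<Lambda> i (\<lambda>x. \<phi> (\<psi> x)) Y"
proof -
  obtain a where a: "a \<in> A i" and Y_eq: "Y = pA i #> a"
    using Y carrier_quotp[OF A_subgroup[OF i]] by auto
  have \<psi>a: "\<psi> a \<in> carrier G"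
    using hom_in_carrier[OF \<psi>] a A_subset[OF i] by blast
  have "\<Lambda> i \<phi> (\<Lambda> i \<psi> Y) = \<Lambda> i \<phi> (pA i #> \<pi> i (\<psi> a))"
    using Lambda_coset[OF i \<psi> a] Y_eq by (simp add: reduce_def)
  also have "\<dots> = reduce i (\<phi> (\<pi> i (\<psi> a)))"
    using Lambda_coset[OF i \<phi> \<pi>_in[OF \<psi>a i]] .
  also have "\<dots> = reduce i (\<phi> (\<psi> a))"
    using reduce_comp_component[OF i \<phi> \<psi> a] by simp
  also have "\<dots> = \<Lambda> i (\<lambda>x. \<phi> (\<psi> x)) Y"
    using Lambda_coset[OF i hom_compose_fun[OF \<psi> \<phi>] a] Y_eq by simp
  finally show ?thesis .
qed

lemma Lambda_identity:
  assumes i: "i < k" and f: "f \<in> hom G G" and f_id: "\<And>x. x \<in> carrier G \<Longrightarrow> f x = x"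
    and Y: "Y \<in> carrier (Q i)"
  shows "\<Lambda> i f Y = Y"
proof -
  obtain a where a: "a \<in> A i" and Y_eq: "Y = pA i #> a"
    using Y carrier_quotp[OF A_subgroup[OF i]] by auto
  then show ?thesis
    using Lambda_coset[OF i f a] f_id A_subset[OF i] reduce_component[OF i a] by auto
qed

lemma Lambda_in_hom:
  assumes i: "i < k" and \<phi>: "\<phi> \<in> hom G G"
  shows "\<Lambda> i \<phi> \<in> hom (Q i) (Q i)"
proof (rule homI)
  fix Y assume "Y \<in> carrier (Q i)"
  then show "\<Lambda> i \<phi> Y \<in> carrier (Q i)"
    by (rule Lambda_in_carrier[OF i \<phi>])
next
  fix Y Z assume "Y \<in> carrier (Q i)" "Z \<in> carrier (Q i)"
  then obtain a b where ab: "a \<in> A i" "Y = pA i #> a" "b \<in> A i" "Z = pA i #> b"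
    using carrier_quotp[OF A_subgroup[OF i]] by auto
  have ac: "a \<in> carrier G" "b \<in> carrier G"
    using ab A_subset[OF i] by auto
  have "\<Lambda> i \<phi> (Y \<otimes>\<^bsub>Q i\<^esub> Z) = reduce i (\<phi> (a \<otimes> b))"
    using ab rcos_mult_quotp[OF A_subgroup[OF i]] Lambda_coset[OF i \<phi>]
      subgroup.m_closed[OF A_subgroup[OF i]] by simp
  also have "\<dots> = reduce i (\<phi> a) \<otimes>\<^bsub>Q i\<^esub> reduce i (\<phi> b)"
    using hom_mult[OF hom_compose_fun[OF \<phi> reduce_hom[OF i]] ac] by simp
  also have "\<dots> = \<Lambda> i \<phi> Y \<otimes>\<^bsub>Q i\<^esub> \<Lambda> i \<phi> Z"
    using ab Lambda_coset[OF i \<phi>] by simp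
  finally show "\<Lambda> i \<phi> (Y \<otimes>\<^bsub>Q i\<^esub> Z) = \<Lambda> i \<phi> Y \<otimes>\<^bsub>Q i\<^esub> \<Lambda> i \<phi> Z" .
qed

lemma Lambda_auto:
  assumes i: "i < k" and \<phi>: "\<phi> \<in> auto G"
  shows "\<Lambda> i \<phi> \<in> auto (Q i)"
proof -
  interpret Aut: group "AutoGroup G"
    by (rule AutoGroup)
  let ?\<phi>' = "inv\<^bsub>AutoGroup G\<^esub> \<phi>"
  have \<phi>h: "\<phi> \<in> hom G G" and \<phi>'h: "?\<phi>' \<in> hom G G"
    using \<phi> Aut.inv_closed[of \<phi>] auto_imp_hom by simp_all
  have inverse: "\<Lambda> i f (\<Lambda> i g Y) = Y"
    if f: "f \<in> hom G G" and g: "g \<in> hom G G" and fg: "\<And>x. x \<in> carrier G \<Longrightarrow> f (g x) = x"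
      and Y: "Y \<in> carrier (Q i)" for f g Y
    using Lambda_comp[OF i f g Y] Lambda_identity[OF i hom_compose_fun[OF g f] fg Y] by simp
  have "\<Lambda> i \<phi> \<in> hom (Q i) (Q i)"
    by (rule Lambda_in_hom[OF i \<phi>h])
  moreover have "bij_betw (\<Lambda> i \<phi>) (carrier (Q i)) (carrier (Q i))"
  proof (rule bij_betw_byWitness[where f' = "\<Lambda> i ?\<phi>'"])
    show "\<forall>Y\<in>carrier (Q i). \<Lambda> i ?\<phi>' (\<Lambda> i \<phi> Y) = Y"
      using inverse[OF \<phi>'h \<phi>h AutoGroup_inv_apply(2)[OF \<phi>]] by blast
    show "\<forall>Y\<in>carrier (Q i). \<Lambda> i \<phi> (\<Lambda> i ?\<phi>' Y) = Y"
      using inverse[OF \<phi>h \<phi>'h AutoGroup_inv_apply(1)[OF \<phi>]] by blast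
  qed (use Lambda_in_carrier[OF i \<phi>h] Lambda_in_carrier[OF i \<phi>'h] in auto)
  moreover have "\<Lambda> i \<phi> \<in> extensional (carrier (Q i))"
    unfolding Lambda_i_def by simp
  ultimately show ?thesis
    unfolding auto_def Bij_def by simp
qed

lemma Lambda_hom: "i < k \<Longrightarrow> \<Lambda> i \<in> hom (AutoGroup G) (AutoGroup (Q i))"
proof (rule homI)
  fix \<phi> assume i: "i < k" and "\<phi> \<in> carrier (AutoGroup G)"
  then show "\<Lambda> i \<phi> \<in> carrier (AutoGroup (Q i))"
    using Lambda_auto by simp
next
  fix \<phi> \<psi> assume i: "i < k" and "\<phi> \<in> carrier (AutoGroup G)" "\<psi> \<in> carrier (AutoGroup G)"
  then have \<phi>: "\<phi> \<in> auto G" and \<psi>: "\<psi> \<in> auto G"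
    by simp_all
  interpret Aut: group "AutoGroup G"
    by (rule AutoGroup)
  have \<phi>\<psi>: "\<phi> \<otimes>\<^bsub>AutoGroup G\<^esub> \<psi> \<in> hom G G"
    using Aut.m_closed[of \<phi> \<psi>] \<phi> \<psi> auto_imp_hom by simp
  have "\<Lambda> i (\<phi> \<otimes>\<^bsub>AutoGroup G\<^esub> \<psi>) = compose (carrier (Q i)) (\<Lambda> i \<phi>) (\<Lambda> i \<psi>)"
  proof (rule extensionalityI[OF _ compose_extensional])
    show "\<Lambda> i (\<phi> \<otimes>\<^bsub>AutoGroup G\<^esub> \<psi>) \<in> extensional (carrier (Q i))"
      unfolding Lambda_i_def by simp
    fix Y assume Y: "Y \<in> carrier (Q i)"
    then obtain a where a: "a \<in> A i" "Y = pA i #> a"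
      using carrier_quotp[OF A_subgroup[OF i]] by auto
    have "\<Lambda> i (\<phi> \<otimes>\<^bsub>AutoGroup G\<^esub> \<psi>) Y = reduce i (\<phi> (\<psi> a))"
      using Lambda_coset[OF i \<phi>\<psi> a(1)] a mult_AutoGroup[OF \<phi> \<psi>] A_subset[OF i] by (auto simp: compose_def)
    also have "\<dots> = \<Lambda> i \<phi> (\<Lambda> i \<psi> Y)"
      using Lambda_comp[OF i auto_imp_hom[OF \<phi>] auto_imp_hom[OF \<psi>] Y]
        Lambda_coset[OF i hom_compose_fun[OF auto_imp_hom[OF \<psi>] auto_imp_hom[OF \<phi>]] a(1)] a(2)
      by simp
    finally show "\<Lambda> i (\<phi> \<otimes>\<^bsub>AutoGroup G\<^esub> \<psi>) Y = compose (carrier (Q i)) (\<Lambda> i \<phi>) (\<Lambda> i \<psi>) Y"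
      using Y by (simp add: compose_def)
  qed
  then show "\<Lambda> i (\<phi> \<otimes>\<^bsub>AutoGroup G\<^esub> \<psi>) = \<Lambda> i \<phi> \<otimes>\<^bsub>AutoGroup (Q i)\<^esub> \<Lambda> i \<psi>"
    using mult_AutoGroup[OF Lambda_auto[OF i \<phi>] Lambda_auto[OF i \<psi>]] by simp
qed

lemma Lambda_pow:
  assumes i: "i < k" and f: "f \<in> hom G G" and Y: "Y \<in> carrier (Q i)"
  shows "\<Lambda> i (\<lambda>x. f x [^] (n::nat)) Y = \<Lambda> i f Y [^]\<^bsub>Q i\<^esub> n"
proof -
  obtain a where a: "a \<in> A i" "Y = pA i #> a"
    using Y carrier_quotp[OF A_subgroup[OF i]] by auto
  have fa: "f a \<in> carrier G"
    using hom_in_carrier[OF f] a A_subset[OF i] by blast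
  show ?thesis
    using Lambda_coset[OF i hom_compose_fun[OF f pow_hom] a(1)] Lambda_coset[OF i f a(1)] a(2)
      hom_nat_pow[OF reduce_hom[OF i] fa is_group group_Q[OF i]] by simp
qed

lemma Lambda_finprod:
  assumes i: "i < k" and F: "\<And>h. h \<in> I \<Longrightarrow> F h \<in> hom G G"
    and prod: "(\<lambda>x. finprod G (\<lambda>h. F h x) I) \<in> hom G G" and Y: "Y \<in> carrier (Q i)"
  shows "\<Lambda> i (\<lambda>x. finprod G (\<lambda>h. F h x) I) Y = finprod (Q i) (\<lambda>h. \<Lambda> i (F h) Y) I"
proof -
  interpret Q: comm_group "Q i"
    using comm_group_Q[OF i] .
  obtain a where a: "a \<in> A i" "Y = pA i #> a"
    using Y carrier_quotp[OF A_subgroup[OF i]] by auto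
  have "a \<in> carrier G"
    using a A_subset[OF i] by blast
  then have Fa: "(\<lambda>h. F h a) \<in> I \<rightarrow> carrier G"
    using hom_in_carrier[OF F] by blast
  have "\<Lambda> i (\<lambda>x. finprod G (\<lambda>h. F h x) I) Y = finprod (Q i) (\<lambda>h. reduce i (F h a)) I"
    using Lambda_coset[OF i prod a(1)] a(2) hom_finprod[OF reduce_hom[OF i] comm_group_Q[OF i] Fa] by simp
  also have "\<dots> = finprod (Q i) (\<lambda>h. \<Lambda> i (F h) Y) I"
  proof (rule Q.finprod_cong')
    show "(\<lambda>h. \<Lambda> i (F h) Y) \<in> I \<rightarrow> carrier (Q i)"
      using Lambda_in_carrier[OF i F Y] by blast
    fix h assume "h \<in> I"
    then show "reduce i (F h a) = \<Lambda> i (F h) Y"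
      using Lambda_coset[OF i F a(1)] a(2) by simp
  qed simp
  finally show ?thesis .
qed

lemma exists_endomorphism_lifting:
  assumes \<psi>: "\<And>i. i < k \<Longrightarrow> \<psi> i \<in> hom (Q i) (Q i)"
  shows "\<exists>S\<in>hom G G. \<forall>i<k. \<forall>Y\<in>carrier (Q i). \<Lambda> i S Y = \<psi> i Y"
proof -
  have "\<exists>s. i < k \<longrightarrow> s \<in> hom (G\<lparr>carrier := A i\<rparr>) (G\<lparr>carrier := A i\<rparr>) \<and>
      (\<forall>x\<in>A i. \<psi> i (pA i #> x) = pA i #> s x)" for i
  proof (cases "i < k")
    case True
    then show ?thesis
      using homocyclic_lift_quotp_hom[OF A_subgroup[OF True] finite_carrier
          homocyclic_components[OF True] \<psi>[OF True]] by blast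
  qed simp
  then obtain s where s_hom: "\<And>i. i < k \<Longrightarrow> s i \<in> hom (G\<lparr>carrier := A i\<rparr>) (G\<lparr>carrier := A i\<rparr>)"
    and s_lift: "\<And>i x. i < k \<Longrightarrow> x \<in> A i \<Longrightarrow> \<psi> i (pA i #> x) = pA i #> s i x"
    by metis
  let ?S = "dp_diag G A k s"
  have "\<Lambda> i ?S Y = \<psi> i Y" if i: "i < k" and Y: "Y \<in> carrier (Q i)" for i Y
  proof -
    obtain a where a: "a \<in> A i" and Y_eq: "Y = pA i #> a"
      using Y carrier_quotp[OF A_subgroup[OF i]] by auto
    have ac: "a \<in> carrier G"
      using a A_subset[OF i] by blast
    have "\<Lambda> i ?S Y = pA i #> s i (\<pi> i a)"
      using Lambda_coset[OF i dp_diag_hom[OF decomposition s_hom] a] Y_eq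
        dp_comp_dp_diag[OF decomposition s_hom i ac] by (simp add: reduce_def)
    then show ?thesis
      using s_lift[OF i a] \<pi>_of_component[OF i a i] Y_eq by simp
  qed
  then show ?thesis
    using dp_diag_hom[OF decomposition s_hom] by blast
qed

lemma correction_in_image_mod_p:
  assumes f: "f \<in> hom G G" and j: "j < k"
    and smaller: "\<And>l. l < k \<Longrightarrow> expo l < expo j \<Longrightarrow> A l \<subseteq> f ` carrier G <#> pmult G p (carrier G)"
    and a: "a \<in> A j" and y: "y \<in> A j" and close: "\<pi> j (f a) \<otimes> inv y \<in> pA j"
  shows "f a \<otimes> inv y \<in> f ` carrier G <#> pmult G p (carrier G)"
proof (rule mem_subgroup_by_dp_comp[OF decomposition subgroup_image_mod_p[OF f]])
  have fa: "f a \<in> carrier G" and yc: "y \<in> carrier G"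
    using hom_in_carrier[OF f] a y A_subset[OF j] by auto
  then show "f a \<otimes> inv y \<in> carrier G"
    by simp
  have pM: "pA l \<subseteq> f ` carrier G <#> pmult G p (carrier G)" if "l < k" for l
    using pmult_subset_image_mod_p[OF f] A_subset[OF that] unfolding pmult_def by blast
  fix l assume l: "l < k"
  have comp: "\<pi> l (f a \<otimes> inv y) = \<pi> l (f a) \<otimes> inv (\<pi> l y)"
    using \<pi>_mult[OF fa _ l] endo_hom_inv[OF \<pi>_hom[OF l] yc] yc by simp
  show "\<pi> l (f a \<otimes> inv y) \<in> f ` carrier G <#> pmult G p (carrier G)"
  proof (cases "l = j")
    case True
    then show ?thesis
      using comp close \<pi>_of_component[OF j y l] pM[OF l] by auto
  next
    case False
    then have comp': "\<pi> l (f a \<otimes> inv y) = \<pi> l (f a)"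
      using comp \<pi>_of_component[OF j y l] \<pi>_carrier[OF fa l] by simp
    consider "expo l < expo j" | "expo j < expo l"
      using distinct_exponents[OF l j False] by linarith
    then show ?thesis
    proof cases
      case 1
      then show ?thesis
        using smaller[OF l 1] \<pi>_in[OF fa l] comp' by auto
    next
      case 2
      have "\<pi> l (f a) \<in> pA l"
        using hom_into_larger_exponent[OF j l 2 hom_compose_fun[OF f \<pi>_hom[OF l]] a] \<pi>_in[OF fa l]
        by simp
      then show ?thesis
        using comp' pM[OF l] by auto
    qed
  qed
qed

(* Induction on the exponent: modulo p-th powers f is block triangular with respect to the
   exponents of the components, and its diagonal blocks are surjective by assumption. *)
lemma components_in_image_mod_p:
  assumes f: "f \<in> hom G G" and surj: "\<And>i. i < k \<Longrightarrow> \<Lambda> i f ` carrier (Q i) = carrier (Q i)"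
  shows "j < k \<Longrightarrow> A j \<subseteq> f ` carrier G <#> pmult G p (carrier G)"
proof (induction j rule: measure_induct_rule[where f = expo])
  case (less j)
  let ?M = "f ` carrier G <#> pmult G p (carrier G)"
  show ?case
  proof
    fix y assume y: "y \<in> A j"
    have yc: "y \<in> carrier G"
      using y A_subset[OF less.prems] by blast
    have "pA j #> y \<in> \<Lambda> j f ` carrier (Q j)"
      using surj[OF less.prems] carrier_quotp[OF A_subgroup[OF less.prems]] y by simp
    then obtain a where a: "a \<in> A j" and "pA j #> y = reduce j (f a)"
      using carrier_quotp[OF A_subgroup[OF less.prems]] Lambda_coset[OF less.prems f] by auto
    then have "\<pi> j (f a) \<otimes> inv y \<in> pA j"
      using rcos_eq_iff[OF pA_subgroup[OF less.prems]] yc hom_in_carrier[OF f] A_subset[OF less.prems]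
        \<pi>_carrier[OF _ less.prems] unfolding reduce_def by (metis subsetD)
    then have "f a \<otimes> inv y \<in> ?M"
      using correction_in_image_mod_p[OF f less.prems _ a y] less.IH by blast
    moreover have ac: "a \<in> carrier G"
      using a A_subset[OF less.prems] by blast
    moreover have fa: "f a \<in> carrier G"
      using hom_in_carrier[OF f ac] .
    moreover have "y = inv (f a \<otimes> inv y) \<otimes> f a"
      using fa yc by (simp add: inv_mult_group m_assoc)
    ultimately show "y \<in> ?M"
      using image_subset_image_mod_p[OF f ac] subgroup_image_mod_p[OF f]
        subgroup.m_closed subgroup.m_inv_closed by metis
  qed
qed

lemma surj_if_Lambda_surj:
  assumes f: "f \<in> hom G G" and surj: "\<And>i. i < k \<Longrightarrow> \<Lambda> i f ` carrier (Q i) = carrier (Q i)"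
  shows "f ` carrier G = carrier G"
proof -
  obtain N where N: "order G = p ^ N"
    using p_group by blast
  have "x \<in> f ` carrier G <#> pmult G p (carrier G)" if x: "x \<in> carrier G" for x
    using mem_subgroup_by_dp_comp[OF decomposition subgroup_image_mod_p[OF f] x]
      components_in_image_mod_p[OF f surj] \<pi>_in[OF x] by blast
  then show ?thesis
    using surj_if_surj_mod_pmult[OF N f] by blast
qed

lemma Lambda_average_term:
  assumes i: "i < k" and H: "group H"
    and \<alpha>: "\<alpha> \<in> hom H (AutoGroup G)" and \<beta>: "\<beta> \<in> hom H (AutoGroup G)"
    and S: "S \<in> hom G G" and \<psi>: "\<psi> \<in> hom (Q i) (Q i)"
    and lift: "\<And>Y. Y \<in> carrier (Q i) \<Longrightarrow> \<Lambda> i S Y = \<psi> Y"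
    and intertwines: "\<And>h Y. h \<in> carrier H \<Longrightarrow> Y \<in> carrier (Q i) \<Longrightarrow> \<psi> (\<Lambda> i (\<beta> h) Y) = \<Lambda> i (\<alpha> h) (\<psi> Y)"
    and h: "h \<in> carrier H" and Y: "Y \<in> carrier (Q i)"
  shows "\<Lambda> i (\<lambda>y. \<alpha> h (S (\<beta> (inv\<^bsub>H\<^esub> h) y))) Y = \<psi> Y"
proof -
  let ?h' = "inv\<^bsub>H\<^esub> h"
  have h': "?h' \<in> carrier H"
    using H h by (simp add: group.inv_closed)
  have \<alpha>h: "\<alpha> h \<in> hom G G" and \<alpha>h': "\<alpha> ?h' \<in> hom G G" and \<beta>h': "\<beta> ?h' \<in> hom G G"
    using rep_apply_hom[OF \<alpha> h] rep_apply_hom[OF \<alpha> h'] rep_apply_hom[OF \<beta> h'] .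
  have \<psi>Y: "\<psi> Y \<in> carrier (Q i)"
    using hom_in_carrier[OF \<psi> Y] .
  have cancel: "\<alpha> h (\<alpha> ?h' x) = x" if x: "x \<in> carrier G" for x
  proof -
    have "\<alpha> h (\<alpha> ?h' x) = \<alpha> (h \<otimes>\<^bsub>H\<^esub> ?h') x"
      using rep_apply_mult[OF \<alpha> h h' x] ..
    also have "\<dots> = x"
      using group.r_inv[OF H h] rep_apply_one[OF H \<alpha> x] by simp
    finally show ?thesis .
  qed
  have "\<Lambda> i (\<lambda>y. \<alpha> h (S (\<beta> ?h' y))) Y = \<Lambda> i (\<alpha> h) (\<Lambda> i S (\<Lambda> i (\<beta> ?h') Y))"
    using Lambda_comp[OF i \<alpha>h hom_compose_fun[OF \<beta>h' S] Y] Lambda_comp[OF i S \<beta>h' Y] by simp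
  also have "\<dots> = \<Lambda> i (\<alpha> h) (\<Lambda> i (\<alpha> ?h') (\<psi> Y))"
    using lift[OF Lambda_in_carrier[OF i \<beta>h' Y]] intertwines[OF h' Y] by simp
  also have "\<dots> = \<psi> Y"
    using Lambda_comp[OF i \<alpha>h \<alpha>h' \<psi>Y] Lambda_identity[OF i hom_compose_fun[OF \<alpha>h' \<alpha>h] cancel \<psi>Y]
    by simp
  finally show ?thesis .
qed

lemma Lambda_rep_average_pow:
  assumes i: "i < k" and H: "group H"
    and \<alpha>: "\<alpha> \<in> hom H (AutoGroup G)" and \<beta>: "\<beta> \<in> hom H (AutoGroup G)"
    and S: "S \<in> hom G G" and \<psi>: "\<psi> \<in> hom (Q i) (Q i)"
    and lift: "\<And>Y. Y \<in> carrier (Q i) \<Longrightarrow> \<Lambda> i S Y = \<psi> Y"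
    and intertwines: "\<And>h Y. h \<in> carrier H \<Longrightarrow> Y \<in> carrier (Q i) \<Longrightarrow> \<psi> (\<Lambda> i (\<beta> h) Y) = \<Lambda> i (\<alpha> h) (\<psi> Y)"
    and mq: "order H * m = p * q + 1" and Y: "Y \<in> carrier (Q i)"
  shows "\<Lambda> i (\<lambda>y. rep_average G H \<alpha> \<beta> S y [^] m) Y = \<psi> Y"
proof -
  have avg: "rep_average G H \<alpha> \<beta> S \<in> hom G G"
    using rep_average_hom[OF H \<alpha> \<beta> S] .
  interpret Q: comm_group "Q i"
    using comm_group_Q[OF i] .
  have \<psi>Y: "\<psi> Y \<in> carrier (Q i)"
    using hom_in_carrier[OF \<psi> Y] .
  have avg_eq: "rep_average G H \<alpha> \<beta> S = (\<lambda>y. finprod G (\<lambda>h. \<alpha> h (S (\<beta> (inv\<^bsub>H\<^esub> h) y))) (carrier H))"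
    by (simp add: fun_eq_iff rep_average_def)
  have "\<Lambda> i (rep_average G H \<alpha> \<beta> S) Y =
      finprod (Q i) (\<lambda>h. \<Lambda> i (\<lambda>y. \<alpha> h (S (\<beta> (inv\<^bsub>H\<^esub> h) y))) Y) (carrier H)"
    unfolding avg_eq
    by (rule Lambda_finprod[OF i rep_average_term_hom[OF H \<alpha> \<beta> S] _ Y]) (use avg[unfolded avg_eq] in auto)
  also have "\<dots> = finprod (Q i) (\<lambda>h. \<psi> Y) (carrier H)"
  proof (rule Q.finprod_cong')
    fix h assume "h \<in> carrier H"
    then show "\<Lambda> i (\<lambda>y. \<alpha> h (S (\<beta> (inv\<^bsub>H\<^esub> h) y))) Y = \<psi> Y"
      using Lambda_average_term[OF i H \<alpha> \<beta> S \<psi> lift intertwines _ Y]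
      by blast
  qed (use \<psi>Y in auto)
  also have "\<dots> = \<psi> Y [^]\<^bsub>Q i\<^esub> order H"
    using Q.finprod_const[OF \<psi>Y] by (simp add: order_def)
  finally have "\<Lambda> i (\<lambda>y. rep_average G H \<alpha> \<beta> S y [^] m) Y = (\<psi> Y [^]\<^bsub>Q i\<^esub> order H) [^]\<^bsub>Q i\<^esub> m"
    using Lambda_pow[OF i avg Y] by simp
  also have "\<dots> = (\<psi> Y [^]\<^bsub>Q i\<^esub> p) [^]\<^bsub>Q i\<^esub> q \<otimes>\<^bsub>Q i\<^esub> \<psi> Y [^]\<^bsub>Q i\<^esub> (1::nat)"
    using Q.nat_pow_mult[OF \<psi>Y, of "p * q" 1] Q.nat_pow_pow[OF \<psi>Y] mq by simp
  also have "\<dots> = \<psi> Y"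
    using quotp_pow_p[OF A_subgroup[OF i] \<psi>Y] \<psi>Y by simp
  finally show ?thesis .
qed

lemma intertwining_auto_exists:
  assumes H: "group H" and coprime: "\<not> p dvd order H"
    and \<alpha>: "\<alpha> \<in> hom H (AutoGroup G)" and \<beta>: "\<beta> \<in> hom H (AutoGroup G)"
    and equiv: "\<And>i. i < k \<Longrightarrow> rep_equiv H (AutoGroup (Q i)) (\<lambda>h. \<Lambda> i (\<alpha> h)) (\<lambda>h. \<Lambda> i (\<beta> h))"
  shows "\<exists>T\<in>auto G. \<forall>h\<in>carrier H. \<forall>x\<in>carrier G. T (\<beta> h x) = \<alpha> h (T x)"
proof -
  have Lambda_rep: "(\<lambda>h. \<Lambda> i (\<rho> h)) \<in> carrier H \<rightarrow> auto (Q i)"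
    if "i < k" "\<rho> \<in> hom H (AutoGroup G)" for i \<rho>
    using Lambda_auto[OF that(1)] that(2) by (auto simp: hom_def)
  have "\<exists>\<psi>\<in>auto (Q i). \<forall>h\<in>carrier H. \<forall>Y\<in>carrier (Q i). \<psi> (\<Lambda> i (\<beta> h) Y) = \<Lambda> i (\<alpha> h) (\<psi> Y)"
    if i: "i < k" for i
    using equiv[OF i] rep_equiv_AutoGroup_iff[OF group_Q[OF i] Lambda_rep[OF i \<alpha>] Lambda_rep[OF i \<beta>]]
    by blast
  then obtain \<psi> where \<psi>: "\<And>i. i < k \<Longrightarrow> \<psi> i \<in> auto (Q i)"
    and intertwines: "\<And>i h Y. i < k \<Longrightarrow> h \<in> carrier H \<Longrightarrow> Y \<in> carrier (Q i) \<Longrightarrow>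
      \<psi> i (\<Lambda> i (\<beta> h) Y) = \<Lambda> i (\<alpha> h) (\<psi> i Y)"
    by metis
  obtain S where S: "S \<in> hom G G" and lift: "\<And>i Y. i < k \<Longrightarrow> Y \<in> carrier (Q i) \<Longrightarrow> \<Lambda> i S Y = \<psi> i Y"
    using exists_endomorphism_lifting[of \<psi>] \<psi> auto_imp_hom by blast
  obtain m q where mq: "order H * m = p * q + 1"
    using exists_inverse_mod_prime[OF prime_p coprime] by blast
  define T where "T y = rep_average G H \<alpha> \<beta> S y [^] m" for y
  have avg: "rep_average G H \<alpha> \<beta> S \<in> hom G G"
    using rep_average_hom[OF H \<alpha> \<beta> S] .
  have T_hom: "T \<in> hom G G"
    unfolding T_def using hom_compose_fun[OF avg pow_hom] .
  have T_intertwines: "T (\<beta> h x) = \<alpha> h (T x)" if "h \<in> carrier H" "x \<in> carrier G" for h x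
    unfolding T_def using rep_average_intertwines[OF H \<alpha> \<beta> S that]
      hom_nat_pow[OF rep_apply_hom[OF \<alpha> that(1)] hom_in_carrier[OF avg that(2)] is_group is_group]
    by simp
  have Lambda_T: "\<Lambda> i T Y = \<psi> i Y" if i: "i < k" and Y: "Y \<in> carrier (Q i)" for i Y
    unfolding T_def[abs_def]
    using Lambda_rep_average_pow[OF i H \<alpha> \<beta> S auto_imp_hom[OF \<psi>[OF i]] lift[OF i] intertwines[OF i] mq Y] .
  have "T ` carrier G = carrier G"
  proof (rule surj_if_Lambda_surj[OF T_hom])
    fix i assume i: "i < k"
    have "\<psi> i ` carrier (Q i) = carrier (Q i)"
      using \<psi>[OF i] unfolding auto_def Bij_def bij_betw_def by blast
    moreover have "\<Lambda> i T ` carrier (Q i) = \<psi> i ` carrier (Q i)"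
      by (rule image_cong) (simp_all add: Lambda_T[OF i])
    ultimately show "\<Lambda> i T ` carrier (Q i) = carrier (Q i)"
      by simp
  qed
  then show ?thesis
    using auto_intertwiner_if_surj[OF \<beta> finite_carrier T_hom] T_intertwines by blast
qed

end

theorem lemma3p8:
  fixes G :: "('a, 'b) monoid_scheme" and H :: "('h, 'c) monoid_scheme"
    and p k :: nat and A :: "nat \<Rightarrow> 'a set" and \<alpha> \<beta> :: "'h \<Rightarrow> ('a \<Rightarrow> 'a)"
  assumes "comm_group G" and "finite (carrier G)" and "Factorial_Ring.prime p"
    and "\<exists>n. order G = p ^ n"
    and "int_dirprod G A k"
    and "\<forall>i<k. A i \<noteq> {\<one>\<^bsub>G\<^esub>} \<and> homocyclic G (A i)"
    and "\<forall>i<k. \<forall>j<k. i \<noteq> j \<longrightarrow> grp_exponent (G\<lparr>carrier := A i\<rparr>) \<noteq> grp_exponent (G\<lparr>carrier := A j\<rparr>)"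
    and "group H" and "finite (carrier H)" and "\<not> p dvd order H"
    and "\<alpha> \<in> hom H (AutoGroup G)" and "\<beta> \<in> hom H (AutoGroup G)"
  shows "rep_equiv H (AutoGroup G) \<alpha> \<beta> \<longleftrightarrow>
    (\<forall>i<k. rep_equiv H (AutoGroup (quotp G p (A i)))
              (\<lambda>h. Lambda_i G p A k i (\<alpha> h)) (\<lambda>h. Lambda_i G p A k i (\<beta> h)))"
proof -
  interpret homocyclic_decomposition G A k p
    by (intro homocyclic_decomposition.intro[OF assms(1)] homocyclic_decomposition_axioms.intro)
      (use assms(2-7) in auto)
  have \<alpha>: "\<alpha> \<in> carrier H \<rightarrow> auto G" and \<beta>: "\<beta> \<in> carrier H \<rightarrow> auto G"
    using assms(11,12) by (simp_all add: hom_def)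
  show ?thesis
  proof
    assume equiv: "rep_equiv H (AutoGroup G) \<alpha> \<beta>"
    show "\<forall>i<k. rep_equiv H (AutoGroup (Q i)) (\<lambda>h. \<Lambda> i (\<alpha> h)) (\<lambda>h. \<Lambda> i (\<beta> h))"
    proof (intro allI impI)
      fix i assume i: "i < k"
      show "rep_equiv H (AutoGroup (Q i)) (\<lambda>h. \<Lambda> i (\<alpha> h)) (\<lambda>h. \<Lambda> i (\<beta> h))"
        by (rule rep_equiv_hom_image[OF AutoGroup group.AutoGroup[OF group_Q[OF i]] Lambda_hom[OF i]])
          (use \<alpha> \<beta> equiv in simp_all)
    qed
  next
    assume equiv: "\<forall>i<k. rep_equiv H (AutoGroup (Q i)) (\<lambda>h. \<Lambda> i (\<alpha> h)) (\<lambda>h. \<Lambda> i (\<beta> h))"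
    have "\<exists>T\<in>auto G. \<forall>h\<in>carrier H. \<forall>x\<in>carrier G. T (\<beta> h x) = \<alpha> h (T x)"
      by (rule intertwining_auto_exists[OF assms(8) assms(10-12)]) (use equiv in blast)
    then show "rep_equiv H (AutoGroup G) \<alpha> \<beta>"
      unfolding rep_equiv_AutoGroup_iff[OF is_group \<alpha> \<beta>] .
  qed
qed

end
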